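(* Let $q>2$, $n\ge2$. For any $\lambda,\Lambda,M>0$ there is a radius $R=R(\lambda,\Lambda,M,n,q)>0$ such that for every curve $u\in\mathcal C$ with $\lambda\le|u'|\le\Lambda$ and $\mathrm{TP}(u)\le M$, and every $\tilde u\in W^{2-1/q,q}(\mathbb{R}/\mathbb{Z},\mathbb{R}^n)$ with $\|(\tilde u-u)'\|_{L^\infty}\le R$, one has $\mathrm{bil}(\tilde u)\le2\,\mathrm{bil}(u)<\infty$.
   Context: $\mathcal C=\{u\in W^{2-1/q,q}(\mathbb{R}/\mathbb{Z},\mathbb{R}^n): u\text{ injective and }\min|u'|>0\}$, where $W^{2-1/q,q}$ consists of $L^q$ functions $u$ whose derivative has finite seminorm $[u']_{W^{1-1/q,q}}=\big(\iint\frac{|u'(x)-u'(y)|^q}{|x-y|^{q}}dx\,dy\big)^{1/q}$. \[\mathrm{TP}(u)=\frac1q\iint_{\mathbb{R}/\mathbb{Z}\times\mathbb{R}/\mathbb{Z}}\frac{|u'(y)\wedge(u(x)-u(y))|^q}{|u(x)-u(y)|^{2q}}\,dx\,dy,\] with $|a\wedge b|$ defined via $\langle a\wedge b,c\wedge d\rangle=\langle a,c\rangle\langle b,d\rangle-\langle a,d\rangle\langle b,c\rangle$. $\mathrm{bil}(u)=\sup_{x\ne y}\frac{|x-y|}{|u(x)-u(y)|}$ with $|x-y|$ the distance in $\mathbb{R}/\mathbb{Z}$. *)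

theory Defs
  imports "HOL-Analysis.Analysis"
begin

text \<open>Curves on R/Z are represented as 1-periodic maps on the reals.
  Distance in R/Z.\<close>
definition circ_dist :: "real \<Rightarrow> real \<Rightarrow> real" where
  "circ_dist x y = min (frac (x - y)) (1 - frac (x - y))"

definition periodic1 :: "(real \<Rightarrow> 'a) \<Rightarrow> bool" where
  "periodic1 u \<longleftrightarrow> (\<forall>x. u (x + 1) = u x)"

abbreviation dv :: "(real \<Rightarrow> 'a::real_normed_vector) \<Rightarrow> real \<Rightarrow> 'a" where
  "dv u x \<equiv> vector_derivative u (at x)"

text \<open>Gagliardo seminorm of u' in W^{1-1/q,q}(R/Z), to the power q.\<close>
definition seminorm_q :: "real \<Rightarrow> (real \<Rightarrow> 'a::real_normed_vector) \<Rightarrow> ennreal" where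
  "seminorm_q q u = (\<integral>\<^sup>+ x. \<integral>\<^sup>+ y.
      ennreal (norm (dv u x - dv u y) powr q / circ_dist x y powr q)
        * indicator {0..1} x * indicator {0..1} y \<partial>lborel \<partial>lborel)"

text \<open>W^{2-1/q,q}(R/Z,R^n) for q > 2 (continuous representatives; by Sobolev
  embedding such functions are C^1).\<close>
definition W_space :: "real \<Rightarrow> (real \<Rightarrow> 'a::euclidean_space) set" where
  "W_space q = {u. periodic1 u \<and> (\<forall>x. u differentiable (at x))
      \<and> continuous_on UNIV (dv u) \<and> seminorm_q q u < \<infinity>}"

definition curve_class :: "real \<Rightarrow> (real \<Rightarrow> 'a::euclidean_space) set" where
  "curve_class q = {u \<in> W_space q. inj_on u {0..<1}
      \<and> (\<exists>c>0. \<forall>x. c \<le> norm (dv u x))}"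

definition wedge_norm :: "'a::real_inner \<Rightarrow> 'a \<Rightarrow> real" where
  "wedge_norm a b = sqrt ((norm a)\<^sup>2 * (norm b)\<^sup>2 - (a \<bullet> b)\<^sup>2)"

definition TP :: "real \<Rightarrow> (real \<Rightarrow> 'a::euclidean_space) \<Rightarrow> ennreal" where
  "TP q u = ennreal (1 / q) * (\<integral>\<^sup>+ x. \<integral>\<^sup>+ y.
      ennreal (wedge_norm (dv u y) (u x - u y) powr q / norm (u x - u y) powr (2 * q))
        * indicator {0..1} x * indicator {0..1} y \<partial>lborel \<partial>lborel)"

definition bil :: "(real \<Rightarrow> 'a::real_normed_vector) \<Rightarrow> ereal" where
  "bil u = (SUP p \<in> {(x, y). x \<in> {0..<1} \<and> y \<in> {0..<1} \<and> x \<noteq> y}.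
      (if u (fst p) = u (snd p) then \<infinity>
       else ereal (circ_dist (fst p) (snd p) / norm (u (fst p) - u (snd p)))))"

end

theory Submission
  imports Defs
begin

text \<open>The integrand of \<open>TP\<close> at \<open>(x, y)\<close> is \<open>\<bar>\<partial>\<^sub>y dir x y\<bar>\<^sup>q\<close>, where \<open>dir x y\<close> is the unit
  vector from \<open>u x\<close> to \<open>u y\<close>.  By convexity of \<open>t powr q\<close>, on a parameter interval of length \<open>h\<close>
  the inner integral is at least \<open>h powr (1 - q)\<close> times the \<open>q\<close>-th power of how far \<open>dir x\<close>
  turns, and integrating in \<open>x\<close> over a comparable length gives \<open>h powr (2 - q)\<close>, which blows up
  as \<open>h \<rightarrow> 0\<close> because \<open>q > 2\<close>.  Hence an energy bound forces straightness at a scale that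
  depends only on the data.  First, short arcs are almost straight: if the chord of an arc falls
  short of its length by a fraction \<open>\<eta>\<close>, then either the energy is large or some point of the
  middle half sees the endpoints in nearly opposite directions, which leaves a subarc of at most
  \<open>3/4\<close> the length whose deficit has dropped only by a geometrically small amount; iterating
  gives arbitrarily short deficient arcs, contradicting differentiability.  Second, if two far
  apart parameters \<open>a, b\<close> had close images, every \<open>x\<close> near \<open>a\<close> would see the almost straight arc
  through \<open>u b\<close> turn by a large angle, and the energy would again be large.  This yields
  \<open>C (b - a) \<le> \<bar>u b - u a\<bar>\<close> with \<open>C\<close> depending only on the data, so \<open>bil u \<le> 1/C\<close>, and a
  perturbation with \<open>\<bar>v' - u'\<bar> \<le> C/2\<close> moves each chord by at most half of this lower bound.\<close>

section \<open>Periodic functions\<close>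

lemma periodic1_shift_nat:
  assumes "periodic1 f"
  shows "f (x + real n) = f x"
proof (induction n arbitrary: x)
  case 0
  then show ?case by simp
next
  case (Suc n)
  have "f (x + real (Suc n)) = f ((x + real n) + 1)" by (simp add: algebra_simps)
  then show ?case using Suc assms unfolding periodic1_def by simp
qed

lemma periodic1_shift_int:
  assumes "periodic1 f"
  shows "f (x + real_of_int k) = f x"
proof (cases "k \<ge> 0")
  case True
  then obtain n where "k = int n" by (metis nonneg_eq_int)
  then show ?thesis using periodic1_shift_nat[OF assms] by simp
next
  case False
  define n where "n = nat (- k)"
  have "k = - int n" using False unfolding n_def by simp
  then have "f x = f ((x + real_of_int k) + real n)" by simp
  then show ?thesis using periodic1_shift_nat[OF assms] by metis
qed

lemma periodic1_frac:
  assumes "periodic1 f"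
  shows "f (frac x) = f x"
  using periodic1_shift_int[OF assms, of "frac x" "\<lfloor>x\<rfloor>"] by (simp add: frac_def)

lemma periodic1_dv:
  fixes f :: "real \<Rightarrow> 'a::real_normed_vector"
  assumes per: "periodic1 f" and diff: "\<And>x. f differentiable (at x)"
  shows "periodic1 (dv f)"
  unfolding periodic1_def
proof
  fix x
  have hvd: "(f has_vector_derivative dv f t) (at t)" for t
    using diff vector_derivative_works by blast
  have shift: "((\<lambda>t. t + 1) has_vector_derivative 1) (at x)"
    by (auto intro!: derivative_eq_intros simp: has_real_derivative_iff_has_vector_derivative[symmetric])
  have "((f \<circ> (\<lambda>t. t + 1)) has_vector_derivative (1 *\<^sub>R dv f (x + 1))) (at x)"
    by (rule vector_diff_chain_at[OF shift]) (simp add: hvd)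
  moreover have "f \<circ> (\<lambda>t. t + 1) = f" using per unfolding periodic1_def by auto
  ultimately have "(f has_vector_derivative dv f (x + 1)) (at x)" by simp
  then show "dv f (x + 1) = dv f x" using vector_derivative_unique_at hvd by blast
qed

lemma has_integral_fold_unit_interval:
  fixes g :: "real \<Rightarrow> real"
  assumes ab: "\<alpha> \<le> \<beta>" "\<beta> - \<alpha> < 1" and a0: "0 \<le> \<alpha>" "\<alpha> < 1"
    and g: "(g has_integral I) {\<alpha>..\<beta>}"
  shows "((\<lambda>y. if \<alpha> \<le> y \<and> y \<le> \<beta> then g y else if y + 1 \<le> \<beta> then g (y + 1) else 0)
    has_integral I) {0..1}"
    (is "(?h has_integral I) {0..1}")
proof (cases "\<beta> \<le> 1")
  case True
  have h1: "(?h has_integral 0) {0..\<alpha>}"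
    by (rule has_integral_spike_finite[where S="{0, \<alpha>}" and f="\<lambda>_. 0"]) (use True a0 ab in auto)
  have h2: "(?h has_integral I) {\<alpha>..\<beta>}"
    by (rule has_integral_spike_finite[where S="{}" and f=g]) (use g in auto)
  have h3: "(?h has_integral 0) {\<beta>..1}"
    by (rule has_integral_spike_finite[where S="{\<beta>}" and f="\<lambda>_. 0"]) (use True a0 ab in auto)
  have h12: "(?h has_integral (0 + I)) {0..\<beta>}" by (rule has_integral_combine[OF _ _ h1 h2]) (use a0 ab in auto)
  have "(?h has_integral (0 + I + 0)) {0..1}" by (rule has_integral_combine[OF _ _ h12 h3]) (use a0 ab True in auto)
  then show ?thesis by simp
next
  case False
  have gi: "g integrable_on {\<alpha>..\<beta>}" using g by blast
  have gi1: "g integrable_on {\<alpha>..1}" by (rule integrable_subinterval_real[OF gi]) (use False in auto)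
  have gi2: "g integrable_on {1..\<beta>}" by (rule integrable_subinterval_real[OF gi]) (use False a0 in auto)
  have split: "integral {\<alpha>..1} g + integral {1..\<beta>} g = I"
    using Henstock_Kurzweil_Integration.integral_combine[OF _ _ gi] False a0 g integral_unique by force
  have g2: "((\<lambda>y. g (y + 1)) has_integral integral {1..\<beta>} g) {0..\<beta> - 1}"
    using has_integral_shift_real_ivl[OF integrable_integral[OF gi2], of 1] by simp
  have h1: "(?h has_integral integral {1..\<beta>} g) {0..\<beta> - 1}"
    by (rule has_integral_spike_finite[OF _ _ g2, of "{}"]) (use False a0 ab in auto)
  have h2: "(?h has_integral 0) {\<beta> - 1..\<alpha>}"
    by (rule has_integral_spike_finite[where S="{\<beta> - 1, \<alpha>}" and f="\<lambda>_. 0"]) (use False a0 ab in auto)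
  have h3: "(?h has_integral integral {\<alpha>..1} g) {\<alpha>..1}"
    by (rule has_integral_spike_finite[OF _ _ integrable_integral[OF gi1], of "{}"]) (use False a0 ab in auto)
  have h12: "(?h has_integral (integral {1..\<beta>} g + 0)) {0..\<alpha>}"
    by (rule has_integral_combine[OF _ _ h1 h2]) (use a0 ab False in auto)
  have "(?h has_integral (integral {1..\<beta>} g + 0 + integral {\<alpha>..1} g)) {0..1}"
    by (rule has_integral_combine[OF _ _ h12 h3]) (use a0 ab False in auto)
  then show ?thesis using split by (simp add: algebra_simps)
qed

lemma has_integral_le_periodic_nn_integral_01:
  fixes F g :: "real \<Rightarrow> real"
  assumes per: "periodic1 F" and ab: "\<alpha> \<le> \<beta>" "\<beta> - \<alpha> < 1" and a0: "0 \<le> \<alpha>" "\<alpha> < 1"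
    and g: "(g has_integral I) {\<alpha>..\<beta>}"
    and g_nonneg: "\<And>y. y \<in> {\<alpha>..\<beta>} \<Longrightarrow> 0 \<le> g y"
    and g_le: "\<And>y. y \<in> {\<alpha>..\<beta>} \<Longrightarrow> g y \<le> F y"
  shows "ennreal I \<le> (\<integral>\<^sup>+y. ennreal (F y) * indicator {0..1} y \<partial>lborel)"
proof -
  define h where "h y = (if \<alpha> \<le> y \<and> y \<le> \<beta> then g y else if y + 1 \<le> \<beta> then g (y + 1) else 0)" for y
  have h_nonneg: "0 \<le> h y" if "y \<in> {0..1}" for y
    unfolding h_def using g_nonneg that a0 ab by auto
  have h_le: "ennreal (h y) \<le> ennreal (F y)" if "y \<in> {0..1}" for y
  proof -
    have "F (y + 1) = F y" using per unfolding periodic1_def by blast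
    moreover have "g (y + 1) \<le> F (y + 1)" if "y + 1 \<le> \<beta>" "0 \<le> y" using g_le[of "y+1"] that a0 by auto
    ultimately show ?thesis unfolding h_def using g_le that a0 ab by (auto intro: ennreal_leI)
  qed
  have h_integral: "(h has_integral I) {0..1}"
    unfolding h_def by (rule has_integral_fold_unit_interval[OF ab a0 g])
  have "(\<integral>\<^sup>+y. ennreal (indicator {0..1} y * h y) \<partial>lborel) = ennreal I"
    by (rule nn_integral_has_integral_lebesgue[OF h_nonneg h_integral])
  moreover have "(\<integral>\<^sup>+y. ennreal (indicator {0..1} y * h y) \<partial>lborel)
      \<le> (\<integral>\<^sup>+y. ennreal (F y) * indicator {0..1} y \<partial>lborel)"
    by (rule nn_integral_mono) (auto simp: indicator_def h_le)
  ultimately show ?thesis by simp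
qed

lemma has_integral_le_periodic_nn_integral:
  fixes F g :: "real \<Rightarrow> real"
  assumes per: "periodic1 F" and ab: "\<alpha> \<le> \<beta>" "\<beta> - \<alpha> < 1"
    and g: "(g has_integral I) {\<alpha>..\<beta>}"
    and g_nonneg: "\<And>y. y \<in> {\<alpha>..\<beta>} \<Longrightarrow> 0 \<le> g y"
    and g_le: "\<And>y. y \<in> {\<alpha>..\<beta>} \<Longrightarrow> g y \<le> F y"
  shows "ennreal I \<le> (\<integral>\<^sup>+y. ennreal (F y) * indicator {0..1} y \<partial>lborel)"
proof -
  define k where "k = real_of_int \<lfloor>\<alpha>\<rfloor>"
  have k: "0 \<le> \<alpha> - k" "\<alpha> - k < 1" unfolding k_def by linarith+
  have g': "((\<lambda>y. g (y + k)) has_integral I) {\<alpha> - k..\<beta> - k}"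
    using has_integral_shift_real_ivl[OF g] .
  show ?thesis
  proof (rule has_integral_le_periodic_nn_integral_01[OF per _ _ k g'])
    fix y assume y: "y \<in> {\<alpha> - k..\<beta> - k}"
    then show "0 \<le> g (y + k)" using g_nonneg by auto
    have "F (y + k) = F y" unfolding k_def by (rule periodic1_shift_int[OF per])
    then show "g (y + k) \<le> F y" using g_le[of "y + k"] y by auto
  qed (use ab in auto)
qed

lemma periodic_nn_integral_ge_01:
  fixes G :: "real \<Rightarrow> ennreal"
  assumes per: "periodic1 G" and w: "0 \<le> w" "w \<le> 1" and p: "0 \<le> p" "p < 1"
    and K: "\<And>x. x \<in> {p..p+w} \<Longrightarrow> K \<le> G x"
  shows "K * ennreal w \<le> (\<integral>\<^sup>+x. G x * indicator {0..1} x \<partial>lborel)"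
proof (cases "p + w \<le> 1")
  case True
  have "(\<integral>\<^sup>+x. K * indicator {p..p+w} x \<partial>lborel) \<le> (\<integral>\<^sup>+x. G x * indicator {0..1} x \<partial>lborel)"
    by (rule nn_integral_mono) (use K True p in \<open>auto simp: indicator_def\<close>)
  moreover have "(\<integral>\<^sup>+x. K * indicator {p..p+w} x \<partial>lborel) = K * ennreal w"
    using w by (simp add: nn_integral_cmult_indicator)
  ultimately show ?thesis by simp
next
  case False
  have "K * indicator {p..1} x + K * indicator {0..<p+w-1} x \<le> G x * indicator {0..1} x" for x
  proof (cases "x \<in> {p..1}")
    case True
    then have "x \<notin> {0..<p+w-1}" using w by auto
    then show ?thesis using True K False p by (auto simp: indicator_def)
  next
    case outside: False
    show ?thesis
    proof (cases "x \<in> {0..<p+w-1}")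
      case True
      have "G (x + 1) = G x" using per unfolding periodic1_def by blast
      moreover have "K \<le> G (x + 1)" using True K w p by auto
      ultimately show ?thesis using True outside p w by (auto simp: indicator_def)
    qed (use outside in \<open>auto simp: indicator_def\<close>)
  qed
  then have "(\<integral>\<^sup>+x. K * indicator {p..1} x + K * indicator {0..<p+w-1} x \<partial>lborel)
      \<le> (\<integral>\<^sup>+x. G x * indicator {0..1} x \<partial>lborel)"
    by (rule nn_integral_mono)
  moreover have "(\<integral>\<^sup>+x. K * indicator {p..1} x + K * indicator {0..<p+w-1} x \<partial>lborel)
      = K * ennreal (1 - p) + K * ennreal (p + w - 1)"
    using False p by (subst nn_integral_add) (auto simp: nn_integral_cmult_indicator)
  moreover have "K * ennreal (1 - p) + K * ennreal (p + w - 1) = K * ennreal w"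
    using False p by (simp add: distrib_left[symmetric] ennreal_plus[symmetric] del: ennreal_plus)
  ultimately show ?thesis by simp
qed

lemma periodic_nn_integral_ge:
  fixes G :: "real \<Rightarrow> ennreal"
  assumes per: "periodic1 G" and w: "0 \<le> w" "w \<le> 1"
    and K: "\<And>x. x \<in> {p..p+w} \<Longrightarrow> K \<le> G x"
  shows "K * ennreal w \<le> (\<integral>\<^sup>+x. G x * indicator {0..1} x \<partial>lborel)"
proof -
  define k where "k = real_of_int \<lfloor>p\<rfloor>"
  show ?thesis
  proof (rule periodic_nn_integral_ge_01[OF per w, of "p - k"])
    show "0 \<le> p - k" "p - k < 1" unfolding k_def by linarith+
    fix x assume "x \<in> {p - k..p - k + w}"
    moreover have "G (x + k) = G x" unfolding k_def by (rule periodic1_shift_int[OF per])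
    ultimately show "K \<le> G x" using K[of "x + k"] by auto
  qed
qed

section \<open>The bilipschitz constant\<close>

lemma circ_dist_pos:
  assumes xy: "x \<in> {0..<1}" "y \<in> {0..<1}" "x \<noteq> y"
  shows "circ_dist x y > 0"
proof -
  have "frac (x - y) \<noteq> 0"
  proof
    assume "frac (x - y) = 0"
    then have "x - y \<in> \<int>" by (simp add: frac_eq_0_iff)
    then obtain k where k: "x - y = real_of_int k" by (auto elim: Ints_cases)
    have "\<bar>x - y\<bar> < 1" using xy by auto
    then have "k = 0" using k by linarith
    then show False using k xy by simp
  qed
  then have "frac (x - y) > 0" using frac_ge_0[of "x - y"] by linarith
  moreover have "frac (x - y) < 1" by (rule frac_lt_1)
  ultimately show ?thesis unfolding circ_dist_def by simp
qed

lemma circ_dist_representative: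
  fixes x y :: real
  assumes xy: "x \<in> {0..<1}" "y \<in> {0..<1}" "x \<noteq> y"
  shows "\<exists>a b. a < b \<and> b - a = circ_dist x y \<and> b - a \<le> 1/2 \<and>
     (\<forall>g :: real \<Rightarrow> 'b::real_normed_vector. periodic1 g \<longrightarrow> norm (g x - g y) = norm (g b - g a))"
proof (cases "y < x")
  case True
  have fr: "frac (x - y) = x - y" using True xy by (simp add: frac_eq)
  show ?thesis
  proof (cases "x - y \<le> 1/2")
    case True
    then show ?thesis unfolding circ_dist_def fr using \<open>y < x\<close>
      by (intro exI[of _ y] exI[of _ x]) auto
  next
    case False
    have "norm (g x - g y) = norm (g (y + 1) - g x)" if "periodic1 g" for g :: "real \<Rightarrow> 'b"
      using that unfolding periodic1_def by (simp add: norm_minus_commute)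
    then show ?thesis unfolding circ_dist_def fr using False xy
      by (intro exI[of _ x] exI[of _ "y + 1"]) auto
  qed
next
  case False
  then have yx: "x < y" using xy by simp
  have fr: "frac (x - y) = x - y + 1"
    using yx xy by (subst frac_unique_iff) auto
  show ?thesis
  proof (cases "y - x \<le> 1/2")
    case True
    then show ?thesis unfolding circ_dist_def fr using yx
      by (intro exI[of _ x] exI[of _ y]) (auto simp: norm_minus_commute)
  next
    case False
    have "norm (g x - g y) = norm (g (x + 1) - g y)" if "periodic1 g" for g :: "real \<Rightarrow> 'b"
      using that unfolding periodic1_def by simp
    then show ?thesis unfolding circ_dist_def fr using False xy
      by (intro exI[of _ y] exI[of _ "x + 1"]) auto
  qed
qed

lemma bil_le_iff:
  fixes g :: "real \<Rightarrow> 'a::real_normed_vector"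
  shows "bil g \<le> ereal B \<longleftrightarrow>
    (\<forall>x\<in>{0..<1}. \<forall>y\<in>{0..<1}. x \<noteq> y \<longrightarrow> g x \<noteq> g y \<and> circ_dist x y \<le> B * norm (g x - g y))"
proof -
  have "(if g x = g y then \<infinity> else ereal (circ_dist x y / norm (g x - g y))) \<le> ereal B \<longleftrightarrow>
      g x \<noteq> g y \<and> circ_dist x y \<le> B * norm (g x - g y)" for x y
    by (cases "g x = g y") (simp_all add: pos_divide_le_eq mult.commute)
  then show ?thesis unfolding bil_def SUP_le_iff by auto
qed

lemma bil_pos: "0 < bil g"
proof -
  let ?S = "{(x, y). x \<in> {0..<1} \<and> y \<in> {0..<1::real} \<and> x \<noteq> y}"
  let ?F = "\<lambda>p. if g (fst p) = g (snd p) then \<infinity>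
    else ereal (circ_dist (fst p) (snd p) / norm (g (fst p) - g (snd p)))"
  have "0 < circ_dist 0 (1/2)" by (rule circ_dist_pos) auto
  then have "0 < ?F (0, 1/2)" by simp
  also have "?F (0, 1/2) \<le> bil g" unfolding bil_def by (rule SUP_upper) simp
  finally show ?thesis .
qed

lemma bil_le_of_chord_bound:
  fixes g :: "real \<Rightarrow> 'a::real_normed_vector"
  assumes per: "periodic1 g" and C: "C > 0"
    and chord: "\<And>a b. a < b \<Longrightarrow> b - a \<le> 1/2 \<Longrightarrow> C * (b - a) \<le> norm (g b - g a)"
  shows "bil g \<le> ereal (1 / C)"
  unfolding bil_le_iff
proof (intro ballI impI)
  fix x y :: real assume xy: "x \<in> {0..<1}" "y \<in> {0..<1}" "x \<noteq> y"
  obtain a b where ab: "a < b" "b - a = circ_dist x y" "b - a \<le> 1/2"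
    and rep: "\<forall>g :: real \<Rightarrow> 'a. periodic1 g \<longrightarrow> norm (g x - g y) = norm (g b - g a)"
    using circ_dist_representative[OF xy] by blast
  have "C * circ_dist x y \<le> norm (g x - g y)" using chord[OF ab(1,3)] ab(2) rep per by simp
  moreover have "0 < C * circ_dist x y" using C circ_dist_pos[OF xy] by simp
  ultimately show "g x \<noteq> g y \<and> circ_dist x y \<le> 1 / C * norm (g x - g y)"
    using C by (auto simp: field_simps)
qed

lemma bil_perturbation:
  fixes u v :: "real \<Rightarrow> 'a::real_normed_vector"
  assumes per: "periodic1 u" "periodic1 v" and B: "bil u \<le> ereal B"
    and close: "\<And>a b. a < b \<Longrightarrow> b - a \<le> 1/2 \<Longrightarrow> norm ((v b - u b) - (v a - u a)) \<le> (b - a) / (2 * B)"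
  shows "bil v \<le> ereal (2 * B)"
  unfolding bil_le_iff
proof (intro ballI impI)
  fix x y :: real assume xy: "x \<in> {0..<1}" "y \<in> {0..<1}" "x \<noteq> y"
  have "0 < ereal B" using bil_pos[of u] B by (rule less_le_trans)
  then have B0: "B > 0" by simp
  obtain a b where ab: "a < b" "b - a = circ_dist x y" "b - a \<le> 1/2"
    and rep: "\<forall>g :: real \<Rightarrow> 'a. periodic1 g \<longrightarrow> norm (g x - g y) = norm (g b - g a)"
    using circ_dist_representative[OF xy] by blast
  define c where "c = circ_dist x y"
  have c0: "c > 0" unfolding c_def by (rule circ_dist_pos[OF xy])
  have "c \<le> B * norm (u x - u y)" using B xy unfolding bil_le_iff c_def by blast
  then have "c / B \<le> norm (u b - u a)" using rep per B0 by (simp add: field_simps)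
  moreover have "norm (u b - u a) \<le> norm (v b - v a) + norm ((v b - u b) - (v a - u a))"
    using norm_triangle_ineq4[of "v b - v a" "(v b - u b) - (v a - u a)"] by simp
  moreover have "norm ((v b - u b) - (v a - u a)) \<le> c / (2 * B)"
    using close[OF ab(1,3)] ab(2) unfolding c_def by simp
  moreover have "c / B - c / (2 * B) = c / (2 * B)" using B0 by (simp add: field_simps)
  ultimately have "c / (2 * B) \<le> norm (v x - v y)" using rep per by simp
  moreover have "0 < c / (2 * B)" using c0 B0 by simp
  ultimately show "v x \<noteq> v y \<and> circ_dist x y \<le> 2 * B * norm (v x - v y)"
    using B0 unfolding c_def by (auto simp: field_simps)
qed

lemma norm_increment_diff_le:
  fixes u v :: "real \<Rightarrow> 'a::banach"
  assumes du: "\<And>x. u differentiable (at x)" and dv: "\<And>x. v differentiable (at x)"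
    and R: "\<And>x. norm (dv v x - dv u x) \<le> R" and ab: "a \<le> b"
  shows "norm ((v b - u b) - (v a - u a)) \<le> R * (b - a)"
proof -
  have "((\<lambda>t. v t - u t) has_vector_derivative (dv v t - dv u t)) (at t within {a..b})" for t
  proof -
    have hv: "(v has_vector_derivative dv v t) (at t)" using dv[of t] vector_derivative_works by blast
    have hu: "(u has_vector_derivative dv u t) (at t)" using du[of t] vector_derivative_works by blast
    show ?thesis using has_vector_derivative_diff[OF hv hu] by (rule has_vector_derivative_at_within)
  qed
  then have "((\<lambda>t. dv v t - dv u t) has_integral ((v b - u b) - (v a - u a))) {a..b}"
    using fundamental_theorem_of_calculus[OF ab, of "\<lambda>t. v t - u t"] by simp
  moreover have "0 \<le> R" using R[of 0] by (metis norm_ge_zero order_trans)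
  ultimately show ?thesis
    using has_integral_bound[of R "\<lambda>t. dv v t - dv u t" _ a b] R ab by auto
qed

lemma bil_le_twice_of_dv_close:
  fixes u v :: "real \<Rightarrow> 'a::banach"
  assumes per: "periodic1 u" "periodic1 v" and diff: "\<And>x. u differentiable (at x)" "\<And>x. v differentiable (at x)"
    and C: "C > 0" "bil u \<le> ereal (1 / C)" and close: "\<And>x. norm (dv v x - dv u x) \<le> C / 2"
  shows "bil v \<le> 2 * bil u \<and> bil u < \<infinity>"
proof -
  obtain B where B: "bil u = ereal B" "B \<le> 1 / C" using C(2) bil_pos[of u] by (cases "bil u") auto
  then have "B > 0" using bil_pos[of u] by simp
  have "norm ((v b - u b) - (v a - u a)) \<le> (b - a) / (2 * B)" if "a < b" for a b
  proof -
    have "norm ((v b - u b) - (v a - u a)) \<le> C / 2 * (b - a)"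
      using norm_increment_diff_le[OF diff close, of a b] that by simp
    also have "\<dots> \<le> 1 / B / 2 * (b - a)"
    proof (rule mult_right_mono)
      show "C / 2 \<le> 1 / B / 2" using B(2) \<open>B > 0\<close> C by (simp add: field_simps)
    qed (use that in simp)
    finally show ?thesis by simp
  qed
  then have "bil v \<le> ereal (2 * B)" by (intro bil_perturbation[OF per]) (auto simp: B)
  then show ?thesis using B by auto
qed

lemma sgn_eq_scaleR_norm: "sgn v = (1 / norm v) *\<^sub>R v"
  by (simp add: sgn_div_norm divide_inverse_commute)

lemma has_vector_derivative_quotient_tendsto:
  fixes f :: "real \<Rightarrow> 'b::real_normed_vector"
  assumes "(f has_vector_derivative D) (at x)"
  shows "((\<lambda>h. (1/h) *\<^sub>R (f (x + h) - f x)) \<longlongrightarrow> D) (at 0)"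
proof -
  have "(\<lambda>h. norm (f (x + h) - f x - h *\<^sub>R D) / norm h) \<midarrow>0\<rightarrow> 0"
    using assms unfolding has_vector_derivative_def has_derivative_at by blast
  moreover have eq: "norm (f (x + h) - f x - h *\<^sub>R D) / norm h = norm ((1/h) *\<^sub>R (f (x + h) - f x) - D)"
    if "h \<noteq> 0" for h
  proof -
    have "(1/h) *\<^sub>R (f (x + h) - f x) - D = (1/h) *\<^sub>R (f (x + h) - f x - h *\<^sub>R D)"
      using that by (simp add: algebra_simps)
    then show ?thesis by (simp only: norm_scaleR real_norm_def) (simp add: abs_divide)
  qed
  moreover have "\<forall>\<^sub>F h in at 0. norm (f (x + h) - f x - h *\<^sub>R D) / norm h = norm ((1/h) *\<^sub>R (f (x + h) - f x) - D)"
    using eq by (auto simp: eventually_at_filter)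
  ultimately have "((\<lambda>h. norm ((1/h) *\<^sub>R (f (x + h) - f x) - D)) \<longlongrightarrow> 0) (at 0)"
    using tendsto_cong by force
  then show ?thesis by (simp add: tendsto_norm_zero_iff LIM_zero_iff)
qed

lemma eventually_at_right_0_witness:
  assumes "eventually P (at_right (0::real))" "e0 > 0"
  shows "\<exists>e>0. e < e0 \<and> P e"
proof -
  obtain b where b: "b > 0" "\<And>y. y > 0 \<Longrightarrow> y < b \<Longrightarrow> P y"
    using assms(1) unfolding eventually_at_right_field by auto
  show ?thesis using b assms(2) by (intro exI[of _ "min b e0 / 2"]) auto
qed

lemma wedge_norm_nonneg: "wedge_norm a b \<ge> 0"
proof -
  have "\<bar>a \<bullet> b\<bar>^2 \<le> (norm a * norm b)^2"
    by (rule power_mono[OF Cauchy_Schwarz_ineq2 abs_ge_zero])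
  then have "(a \<bullet> b)^2 \<le> (norm a)^2 * (norm b)^2" by (simp add: power_mult_distrib)
  then show ?thesis unfolding wedge_norm_def by simp
qed

lemma powr_ge_tangent:
  fixes q c t :: real
  assumes q: "q \<ge> 1" and c: "c > 0" and t: "t \<ge> 0"
  shows "(1 - q) * c powr q + q * c powr (q - 1) * t \<le> t powr q"
proof (cases "t = 0")
  case True
  have "(1 - q) * c powr q \<le> 0" using q c by (simp add: mult_nonpos_nonneg)
  then show ?thesis using True by simp
next
  case False
  then have t0: "t > 0" using t by simp
  have "t powr q - c powr q \<ge> (q * c powr (q - 1)) * (t - c)"
  proof (rule convex_on_imp_above_tangent[OF powr_convex[OF q]])
    show "connected {0::real<..}" by simp
    show "c \<in> interior {0<..}" using c by (simp add: interior_open)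
    show "t \<in> {0<..}" using t0 by simp
    show "((\<lambda>x. x powr q) has_real_derivative q * c powr (q - 1)) (at c within {0<..})"
      by (rule has_field_derivative_at_within[OF has_real_derivative_powr[OF c]])
  qed
  moreover have "q * c powr (q - 1) * (t - c) = q * c powr (q - 1) * t - q * c powr q"
  proof -
    have "c powr (q - 1) * c = c powr q" using c by (simp add: powr_diff)
    then show ?thesis by (simp add: algebra_simps)
  qed
  moreover have "(1 - q) * c powr q = c powr q - q * c powr q" by (simp add: algebra_simps)
  ultimately show ?thesis by linarith
qed

lemma tangent_value_at_ratio:
  fixes h s q :: real
  assumes h: "h > 0" and s: "s > 0"
  shows "h * ((1 - q) * (s / h) powr q) + q * (s / h) powr (q - 1) * s = h powr (1 - q) * s powr q"
proof -
  define c where "c = s / h"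
  have c0: "c > 0" unfolding c_def using h s by simp
  have "q * c powr (q - 1) * s = q * h * c powr q"
  proof -
    have "c powr (q - 1) * c = c powr q" using c0 by (simp add: powr_diff)
    moreover have "s = c * h" unfolding c_def using h by simp
    ultimately show ?thesis by (simp add: algebra_simps)
  qed
  then have "h * ((1 - q) * c powr q) + q * c powr (q - 1) * s = h * c powr q"
    by (simp add: algebra_simps)
  also have "h * c powr q = h powr (1 - q) * s powr q"
    unfolding c_def using h s by (simp add: powr_divide powr_diff)
  finally show ?thesis unfolding c_def .
qed

lemma exists_small_powr_gt:
  fixes q A C b :: real
  assumes q: "q > 2" and C: "C > 0" and b: "b > 0"
  shows "\<exists>h. 0 < h \<and> h \<le> b \<and> A < C * h powr (2 - q)"
proof -
  define e where "e = 2 - q"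
  have e0: "e < 0" unfolding e_def using q by simp
  define t where "t = ((\<bar>A\<bar> + 1) / C) powr (1 / e)"
  have t0: "t > 0" unfolding t_def using C by simp
  have te: "t powr e = (\<bar>A\<bar> + 1) / C"
    unfolding t_def using e0 C by (simp add: powr_powr)
  define h where "h = min b t"
  have h0: "h > 0" unfolding h_def using b t0 by simp
  have "t powr e \<le> h powr e" by (rule powr_mono2') (use e0 h0 h_def in auto)
  then have "\<bar>A\<bar> + 1 \<le> C * h powr e" using te C by (simp add: field_simps)
  then show ?thesis using h0 unfolding h_def e_def by (intro exI[of _ "min b t"]) auto
qed

lemma triangle_excess_le_sgn_sum:
  fixes P Q X :: "'b::real_normed_vector"
  assumes "P \<noteq> X" "Q \<noteq> X"
  shows "norm (P - X) + norm (Q - X) \<le> norm (P - Q) + norm (sgn (P - X) + sgn (Q - X)) * norm (P - X)"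
proof -
  define a where "a = norm (P - X)"
  define b where "b = norm (Q - X)"
  have a0: "a > 0" and b0: "b > 0" using assms unfolding a_def b_def by auto
  have P: "P - X = a *\<^sub>R sgn (P - X)" and Q: "Q - X = b *\<^sub>R sgn (Q - X)"
    unfolding a_def b_def by (simp_all add: sgn_eq_scaleR_norm assms)
  have "(a + b) *\<^sub>R sgn (Q - X) = (Q - P) + a *\<^sub>R (sgn (P - X) + sgn (Q - X))"
  proof -
    have "Q - P = (Q - X) - (P - X)" by simp
    also have "\<dots> = b *\<^sub>R sgn (Q - X) - a *\<^sub>R sgn (P - X)" using P Q by simp
    finally show ?thesis by (simp add: algebra_simps)
  qed
  then have "norm ((a + b) *\<^sub>R sgn (Q - X)) \<le> norm (Q - P) + norm (a *\<^sub>R (sgn (P - X) + sgn (Q - X)))"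
    by (metis norm_triangle_ineq)
  then show ?thesis
    using a0 b0 assms unfolding a_def b_def by (simp add: norm_sgn norm_minus_commute mult.commute)
qed

lemma norm_sgn_diff_le:
  fixes v w :: "'b::real_normed_vector"
  assumes "v \<noteq> 0"
  shows "norm (sgn v - sgn w) \<le> 2 * norm (v - w) / norm v"
  unfolding sgn_eq_scaleR_norm
proof (cases "w = 0")
  case True
  then show "norm ((1 / norm v) *\<^sub>R v - (1 / norm w) *\<^sub>R w) \<le> 2 * norm (v - w) / norm v"
    using assms by simp
next
  case False
  have nv: "norm v > 0" using assms by simp
  have nw: "norm w > 0" using False by simp
  have "(1 / norm v) *\<^sub>R v - (1 / norm w) *\<^sub>R w = (1 / norm v) *\<^sub>R (v - w) + (1 / norm v - 1 / norm w) *\<^sub>R w"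
    by (simp add: algebra_simps)
  then have "norm ((1 / norm v) *\<^sub>R v - (1 / norm w) *\<^sub>R w)
      \<le> norm ((1 / norm v) *\<^sub>R (v - w)) + norm ((1 / norm v - 1 / norm w) *\<^sub>R w)"
    by (metis norm_triangle_ineq)
  also have "norm ((1 / norm v) *\<^sub>R (v - w)) = norm (v - w) / norm v" by simp
  also have "norm ((1 / norm v - 1 / norm w) *\<^sub>R w) = \<bar>norm w - norm v\<bar> / norm v"
  proof -
    have "\<bar>1 / norm v - 1 / norm w\<bar> * norm w = \<bar>(norm w - norm v) / (norm v * norm w)\<bar> * norm w"
      using nv nw by (simp add: field_simps)
    also have "\<dots> = \<bar>norm w - norm v\<bar> / norm v" using nv nw by (simp add: abs_divide abs_mult field_simps)
    finally show ?thesis by simp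
  qed
  also have "\<bar>norm w - norm v\<bar> \<le> norm (v - w)" by (metis norm_triangle_ineq3 norm_minus_commute)
  then have "\<bar>norm w - norm v\<bar> / norm v \<le> norm (v - w) / norm v" using nv by (simp add: divide_right_mono)
  ultimately show "norm ((1 / norm v) *\<^sub>R v - (1 / norm w) *\<^sub>R w) \<le> 2 * norm (v - w) / norm v"
    by simp
qed

lemma norm_sgn_add_sq_le:
  fixes v1 v2 :: "'b::real_inner"
  assumes r: "v1 \<noteq> 0" "v2 \<noteq> 0" and e: "0 \<le> \<eta>" "\<eta> \<le> 1"
    and ch: "(1 - \<eta>) * (norm v1 + norm v2) \<le> norm (v1 - v2)"
  shows "(norm (sgn v1 + sgn v2))^2 \<le> 2 * \<eta> * (norm v1 + norm v2)^2 / (norm v1 * norm v2)"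
  unfolding sgn_eq_scaleR_norm
proof -
  define r1 where "r1 = norm v1"
  define r2 where "r2 = norm v2"
  have r0: "r1 > 0" "r2 > 0" using r unfolding r1_def r2_def by auto
  define p where "p = v1 \<bullet> v2"
  have n1: "(norm ((1 / r1) *\<^sub>R v1 + (1 / r2) *\<^sub>R v2))^2 = 2 + 2 * p / (r1 * r2)"
  proof -
    have "(norm ((1 / r1) *\<^sub>R v1 + (1 / r2) *\<^sub>R v2))^2
        = ((1 / r1) *\<^sub>R v1 + (1 / r2) *\<^sub>R v2) \<bullet> ((1 / r1) *\<^sub>R v1 + (1 / r2) *\<^sub>R v2)"
      by (simp add: power2_norm_eq_inner)
    also have "\<dots> = (v1 \<bullet> v1) / r1^2 + (v2 \<bullet> v2) / r2^2 + 2 * p / (r1 * r2)"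
      unfolding p_def by (simp add: inner_add_left inner_add_right inner_commute power2_eq_square field_simps)
    also have "v1 \<bullet> v1 = r1^2" unfolding r1_def by (simp add: power2_norm_eq_inner)
    also have "v2 \<bullet> v2 = r2^2" unfolding r2_def by (simp add: power2_norm_eq_inner)
    finally show ?thesis using r0 by simp
  qed
  have n2: "(norm (v1 - v2))^2 = r1^2 + r2^2 - 2 * p"
    unfolding r1_def r2_def p_def by (simp add: power2_norm_eq_inner inner_diff_left inner_diff_right inner_commute)
  have "((1 - \<eta>) * (r1 + r2))^2 \<le> (norm (v1 - v2))^2"
    by (rule power_mono) (use ch e r0 r1_def r2_def in auto)
  then have "2 * p \<le> r1^2 + r2^2 - ((1 - \<eta>) * (r1 + r2))^2" using n2 by linarith
  then have "2 * p / (r1 * r2) \<le> (r1^2 + r2^2 - ((1 - \<eta>) * (r1 + r2))^2) / (r1 * r2)"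
    using r0 by (simp add: divide_right_mono)
  moreover have "2 + (r1^2 + r2^2 - ((1 - \<eta>) * (r1 + r2))^2) / (r1 * r2)
      = ((r1 + r2)^2 - ((1 - \<eta>) * (r1 + r2))^2) / (r1 * r2)"
    using r0 by (simp add: field_simps power2_eq_square)
  ultimately have "2 + 2 * p / (r1 * r2) \<le> ((r1 + r2)^2 - ((1 - \<eta>) * (r1 + r2))^2) / (r1 * r2)"
    by linarith
  also have "((r1 + r2)^2 - ((1 - \<eta>) * (r1 + r2))^2) = (2 * \<eta> - \<eta>^2) * (r1 + r2)^2"
    by (simp add: power2_eq_square algebra_simps)
  also have "(2 * \<eta> - \<eta>^2) * (r1 + r2)^2 / (r1 * r2) \<le> 2 * \<eta> * (r1 + r2)^2 / (r1 * r2)"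
    using r0 by (intro divide_right_mono mult_right_mono) auto
  finally show "(norm ((1 / norm v1) *\<^sub>R v1 + (1 / norm v2) *\<^sub>R v2))^2
      \<le> 2 * \<eta> * (norm v1 + norm v2)^2 / (norm v1 * norm v2)"
    using n1 unfolding r1_def r2_def by simp
qed

lemma norm_sgn_add_le_half:
  fixes v1 v2 :: "'b::real_inner"
  assumes r: "0 < r" "r \<le> norm v1" "r \<le> norm v2" and R: "norm v1 \<le> R" "norm v2 \<le> R"
    and \<eta>: "0 \<le> \<eta>" "\<eta> \<le> 1" "32 * \<eta> * R^2 \<le> r^2"
    and ch: "(1 - \<eta>) * (norm v1 + norm v2) \<le> norm (v1 - v2)"
  shows "norm (sgn v1 + sgn v2) \<le> 1/2"
proof -
  have v0: "v1 \<noteq> 0" "v2 \<noteq> 0" using r by auto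
  have "8 * \<eta> * (norm v1 + norm v2)^2 \<le> 8 * \<eta> * (2 * R)^2"
    using r R \<eta> by (intro mult_left_mono power_mono) auto
  also have "\<dots> = 32 * \<eta> * R^2" by (simp add: power2_eq_square algebra_simps)
  also have "\<dots> \<le> r * r" using \<eta>(3) by (simp add: power2_eq_square)
  also have "\<dots> \<le> norm v1 * norm v2" using r by (intro mult_mono) auto
  finally have "2 * \<eta> * (norm v1 + norm v2)^2 / (norm v1 * norm v2) \<le> (1/2)^2"
    using v0 by (simp add: field_simps power2_eq_square)
  moreover have "(norm (sgn v1 + sgn v2))^2 \<le> 2 * \<eta> * (norm v1 + norm v2)^2 / (norm v1 * norm v2)"
    by (rule norm_sgn_add_sq_le[OF v0 \<eta>(1,2) ch])
  ultimately have "(norm (sgn v1 + sgn v2))^2 \<le> (1/2)^2" by linarith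
  then show ?thesis by (rule power2_le_imp_le) simp
qed

lemma sgn_diff_ge_of_nearly_opposite:
  fixes P1 P2 Q X :: "'b::real_normed_vector"
  assumes r: "r > 0" "r \<le> norm (P1 - Q)" "r \<le> norm (P2 - Q)"
    and opposite: "norm (sgn (P1 - Q) + sgn (P2 - Q)) \<le> 1/2"
    and X: "norm (X - Q) \<le> r / 16"
  shows "1 \<le> norm (sgn (P2 - X) - sgn (P1 - X))"
proof -
  have close: "norm (sgn (P - Q) - sgn (P - X)) \<le> 1/8" if P: "r \<le> norm (P - Q)" for P
  proof -
    have "norm (sgn (P - Q) - sgn (P - X)) \<le> 2 * norm ((P - Q) - (P - X)) / norm (P - Q)"
      by (rule norm_sgn_diff_le) (use r P in auto)
    also have "\<dots> = 2 * norm (X - Q) / norm (P - Q)" by (simp add: norm_minus_commute)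
    also have "\<dots> \<le> 2 * (r / 16) / r" by (rule frac_le) (use X r P in auto)
    also have "\<dots> = 1/8" using r by simp
    finally show ?thesis .
  qed
  define f1 where "f1 = sgn (P1 - Q)"
  define f2 where "f2 = sgn (P2 - Q)"
  define e1 where "e1 = sgn (P1 - X)"
  define e2 where "e2 = sgn (P2 - X)"
  have "2 *\<^sub>R f1 = (f1 - f2) + (f1 + f2)" by (simp add: algebra_simps scaleR_2)
  then have "norm (2 *\<^sub>R f1) \<le> norm (f1 - f2) + norm (f1 + f2)" by (metis norm_triangle_ineq)
  moreover have "norm f1 = 1" using r unfolding f1_def by (auto simp: norm_sgn)
  ultimately have far: "3/2 \<le> norm (f1 - f2)" using opposite unfolding f1_def f2_def by simp
  have "(f1 - e1) - (e2 - e1) + (e2 - f2) = f1 - f2" by (simp add: algebra_simps)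
  then have "norm (f1 - f2) \<le> norm ((f1 - e1) - (e2 - e1)) + norm (e2 - f2)"
    using norm_triangle_ineq[of "(f1 - e1) - (e2 - e1)" "e2 - f2"] by simp
  then have "norm (f1 - f2) \<le> norm (f1 - e1) + norm (e2 - e1) + norm (f2 - e2)"
    using norm_triangle_ineq4[of "f1 - e1" "e2 - e1"] by (simp add: norm_minus_commute)
  then show ?thesis using far close[OF r(2)] close[OF r(3)] unfolding f1_def f2_def e1_def e2_def
    by linarith
qed

section \<open>Regular closed curves\<close>

locale regular_curve =
  fixes u :: "real \<Rightarrow> 'a::euclidean_space" and lam Lam :: real
  assumes periodic: "periodic1 u"
    and differentiable: "\<And>x. u differentiable (at x)"
    and continuous_dv: "continuous_on UNIV (dv u)"
    and inj: "inj_on u {0..<1}"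
    and dv_ge: "\<And>x. lam \<le> norm (dv u x)"
    and dv_le: "\<And>x. norm (dv u x) \<le> Lam"
    and lam_pos: "lam > 0"
begin

lemma Lam_pos: "Lam > 0"
  using dv_ge[of 0] dv_le[of 0] lam_pos by linarith

lemma u_shift_1: "u (x + 1) = u x"
  using periodic unfolding periodic1_def by blast

lemma dv_periodic: "periodic1 (dv u)"
  by (rule periodic1_dv[OF periodic differentiable])

lemma dv_shift_1: "dv u (x + 1) = dv u x"
  using dv_periodic unfolding periodic1_def by blast

lemma u_neq:
  assumes "x \<noteq> y" "\<bar>x - y\<bar> < 1"
  shows "u x \<noteq> u y"
proof
  assume "u x = u y"
  then have "u (frac x) = u (frac y)" using periodic1_frac[OF periodic] by metis
  moreover have "frac x \<in> {0..<1}" "frac y \<in> {0..<1}" by (auto simp: frac_lt_1)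
  ultimately have "frac x = frac y" using inj by (meson inj_onD)
  then have "x - y = real_of_int (\<lfloor>x\<rfloor> - \<lfloor>y\<rfloor>)" by (simp add: frac_def)
  moreover have "\<lfloor>x\<rfloor> \<noteq> \<lfloor>y\<rfloor>" using \<open>frac x = frac y\<close> assms(1) by (auto simp: frac_def)
  ultimately show False using assms(2) by linarith
qed

lemma u_has_vector_derivative: "(u has_vector_derivative dv u x) (at x within S)"
  using differentiable vector_derivative_works has_vector_derivative_at_within by blast

lemma continuous_on_u: "continuous_on S u"
  using differentiable differentiable_imp_continuous_on differentiable_at_imp_differentiable_on by blast

lemma continuous_on_dv: "continuous_on S (dv u)"
  using continuous_dv continuous_on_subset by blast

lemma dv_has_integral: "a \<le> b \<Longrightarrow> (dv u has_integral (u b - u a)) {a..b}"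
  by (rule fundamental_theorem_of_calculus) (auto intro: u_has_vector_derivative)

definition arclen :: "real \<Rightarrow> real \<Rightarrow> real" where
  "arclen a b = integral {a..b} (\<lambda>t. norm (dv u t))"

lemma norm_dv_integrable: "(\<lambda>t. norm (dv u t)) integrable_on {a..b}"
  by (intro integrable_continuous_interval continuous_intros continuous_on_dv)

lemma chord_le_arclen:
  assumes "a \<le> b"
  shows "norm (u b - u a) \<le> arclen a b"
proof -
  have "u b - u a = integral {a..b} (dv u)" using dv_has_integral[OF assms] by (simp add: integral_unique)
  then show ?thesis unfolding arclen_def
    using integral_norm_bound_integral[OF integrable_continuous_interval[OF continuous_on_dv]
        norm_dv_integrable, of a b] by simp
qed

lemma arclen_add: "a \<le> c \<Longrightarrow> c \<le> b \<Longrightarrow> arclen a c + arclen c b = arclen a b"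
  unfolding arclen_def by (rule Henstock_Kurzweil_Integration.integral_combine[OF _ _ norm_dv_integrable])

lemma arclen_ge:
  assumes "a \<le> b"
  shows "lam * (b - a) \<le> arclen a b"
proof -
  have "integral {a..b} (\<lambda>t. lam) \<le> integral {a..b} (\<lambda>t. norm (dv u t))"
    by (rule integral_le) (auto intro: norm_dv_integrable dv_ge)
  then show ?thesis using assms unfolding arclen_def by (simp add: algebra_simps)
qed

lemma arclen_nonneg: "0 \<le> arclen a b"
  unfolding arclen_def by (rule integral_nonneg[OF norm_dv_integrable]) simp

lemma arclen_le:
  assumes "a \<le> b"
  shows "arclen a b \<le> Lam * (b - a)"
proof -
  have "integral {a..b} (\<lambda>t. norm (dv u t)) \<le> integral {a..b} (\<lambda>t. Lam)"
    by (rule integral_le) (auto intro: norm_dv_integrable dv_le)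
  then show ?thesis using assms unfolding arclen_def by (simp add: algebra_simps)
qed

lemma chord_le_Lam: "norm (u b - u a) \<le> Lam * \<bar>b - a\<bar>"
proof (cases "a \<le> b")
  case True
  then show ?thesis using chord_le_arclen arclen_le by fastforce
next
  case False
  then show ?thesis using chord_le_arclen[of b a] arclen_le[of b a] by (simp add: norm_minus_commute)
qed

lemma dv_uniformly_continuous:
  assumes "e > 0"
  shows "\<exists>d>0. d \<le> 1 \<and> (\<forall>a t. \<bar>t - a\<bar> \<le> d \<longrightarrow> norm (dv u t - dv u a) \<le> e)"
proof -
  have "uniformly_continuous_on {-2..3} (dv u)"
    by (rule compact_uniformly_continuous[OF continuous_on_dv compact_Icc])
  then obtain d where d: "d > 0"
    and dd: "\<And>x x'. x \<in> {-2..3} \<Longrightarrow> x' \<in> {-2..3} \<Longrightarrow> dist x' x < d \<Longrightarrow> dist (dv u x') (dv u x) < e"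
    unfolding uniformly_continuous_on_def using assms by metis
  define d' where "d' = min 1 (d/2)"
  have "norm (dv u t - dv u a) \<le> e" if "\<bar>t - a\<bar> \<le> d'" for a t
  proof -
    define k where "k = \<lfloor>a\<rfloor>"
    have a1: "a - k \<in> {0..<1}" unfolding k_def by (simp add: floor_le_iff) linarith
    have "dv u (a - k) = dv u a" "dv u (t - k) = dv u t"
      using periodic1_shift_int[OF dv_periodic, of "a - k" k] periodic1_shift_int[OF dv_periodic, of "t - k" k]
      by simp_all
    moreover have "t - k \<in> {-2..3}" "a - k \<in> {-2..3}" using a1 that unfolding d'_def by auto
    moreover have "dist (t - k) (a - k) < d" using that d unfolding d'_def dist_real_def by auto
    ultimately show ?thesis using dd[of "a - k" "t - k"] by (simp add: dist_norm)
  qed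
  moreover have "d' > 0" "d' \<le> 1" using d unfolding d'_def by auto
  ultimately show ?thesis by blast
qed

lemma local_linear_approx:
  assumes "e > 0"
  shows "\<exists>d>0. \<forall>a b. a \<le> b \<longrightarrow> b - a \<le> d \<longrightarrow>
      norm (u b - u a - (b - a) *\<^sub>R dv u a) \<le> e * (b - a) \<and> arclen a b \<le> (norm (dv u a) + e) * (b - a)"
proof -
  obtain d where d: "d > 0" and dd: "\<And>a t. \<bar>t - a\<bar> \<le> d \<Longrightarrow> norm (dv u t - dv u a) \<le> e"
    using dv_uniformly_continuous[OF assms] by blast
  have "norm (u b - u a - (b - a) *\<^sub>R dv u a) \<le> e * (b - a) \<and> arclen a b \<le> (norm (dv u a) + e) * (b - a)"
    if ab: "a \<le> b" "b - a \<le> d" for a b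
  proof
    have "((\<lambda>t. dv u t - dv u a) has_integral (u b - u a - (b - a) *\<^sub>R dv u a)) {a..b}"
      using has_integral_diff[OF dv_has_integral[OF ab(1)] has_integral_const_real[of "dv u a" a b]] ab by simp
    then show "norm (u b - u a - (b - a) *\<^sub>R dv u a) \<le> e * (b - a)"
      using has_integral_bound[of e "\<lambda>t. dv u t - dv u a" _ a b] dd ab assms by auto
    have "integral {a..b} (\<lambda>t. norm (dv u t)) \<le> integral {a..b} (\<lambda>t. norm (dv u a) + e)"
    proof (rule integral_le[OF norm_dv_integrable])
      show "(\<lambda>t. norm (dv u a) + e) integrable_on {a..b}" by (rule integrable_const_ivl)
      fix t assume "t \<in> {a..b}"
      then have "norm (dv u t - dv u a) \<le> e" using dd ab by auto
      then show "norm (dv u t) \<le> norm (dv u a) + e" using norm_triangle_sub[of "dv u t" "dv u a"] by linarith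
    qed
    then show "arclen a b \<le> (norm (dv u a) + e) * (b - a)" using ab unfolding arclen_def by (simp add: mult.commute)
  qed
  then show ?thesis using d by blast
qed

lemma chord_gt_arclen_locally:
  assumes \<eta>: "0 < \<eta>" "\<eta> \<le> 1"
  shows "\<exists>d>0. \<forall>a b. a < b \<longrightarrow> b - a \<le> d \<longrightarrow> (1 - \<eta>) * arclen a b < norm (u b - u a)"
proof -
  define eps where "eps = lam * \<eta> / 4"
  have eps0: "eps > 0" unfolding eps_def using lam_pos \<eta> by simp
  obtain d where d: "d > 0" and approx: "\<And>a b. a \<le> b \<Longrightarrow> b - a \<le> d \<Longrightarrow>
      norm (u b - u a - (b - a) *\<^sub>R dv u a) \<le> eps * (b - a) \<and> arclen a b \<le> (norm (dv u a) + eps) * (b - a)"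
    using local_linear_approx[OF eps0] by blast
  have "(1 - \<eta>) * arclen a b < norm (u b - u a)" if ab: "a < b" "b - a \<le> d" for a b
  proof -
    define t where "t = b - a"
    define N where "N = norm (dv u a)"
    have t0: "t > 0" unfolding t_def using ab by simp
    have "norm (t *\<^sub>R dv u a) \<le> norm (u b - u a) + norm (u b - u a - t *\<^sub>R dv u a)"
      by (metis norm_triangle_sub add.commute norm_minus_commute)
    moreover have "norm (t *\<^sub>R dv u a) = t * N" using t0 by (simp add: N_def)
    moreover have "norm (u b - u a - t *\<^sub>R dv u a) \<le> eps * t" using approx[of a b] ab unfolding t_def by simp
    moreover have "(N - eps) * t = t * N - eps * t" by (simp add: algebra_simps)
    ultimately have lower: "(N - eps) * t \<le> norm (u b - u a)" by linarith
    have upper: "arclen a b \<le> (N + eps) * t" using approx[of a b] ab unfolding t_def N_def by simp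
    have "2 * eps < \<eta> * lam" unfolding eps_def using lam_pos \<eta> by simp
    moreover have "\<eta> * lam \<le> \<eta> * N" using dv_ge[of a] \<eta> unfolding N_def by (intro mult_left_mono) auto
    moreover have "(2 - \<eta>) * eps \<le> 2 * eps" using \<eta> eps0 by (intro mult_right_mono) auto
    moreover have "(1 - \<eta>) * (N + eps) = N - eps - (\<eta> * N - (2 - \<eta>) * eps)" by (simp add: algebra_simps)
    ultimately have gap: "(1 - \<eta>) * (N + eps) < N - eps" by linarith
    have "(1 - \<eta>) * arclen a b \<le> (1 - \<eta>) * (N + eps) * t"
      unfolding mult.assoc by (rule mult_left_mono[OF upper]) (use \<eta> in simp)
    also have "\<dots> < (N - eps) * t" by (rule mult_strict_right_mono[OF gap t0])
    also have "\<dots> \<le> norm (u b - u a)" by (rule lower)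
    finally show ?thesis .
  qed
  then show ?thesis using d by blast
qed

definition dir :: "real \<Rightarrow> real \<Rightarrow> 'a" where
  "dir x y = sgn (u y - u x)"

definition dir_deriv :: "real \<Rightarrow> real \<Rightarrow> 'a" where
  "dir_deriv x y = (1 / norm (u y - u x)) *\<^sub>R dv u y
     - (((u y - u x) \<bullet> dv u y) / norm (u y - u x) ^ 3) *\<^sub>R (u y - u x)"

lemma dir_has_vector_derivative:
  assumes "u y \<noteq> u x"
  shows "(dir x has_vector_derivative dir_deriv x y) (at y)"
proof -
  define w where "w t = u t - u x" for t
  have wd: "(w has_vector_derivative dv u y) (at y)"
    unfolding w_def using u_has_vector_derivative[of y UNIV] by (auto intro!: derivative_eq_intros)
  have w0: "w y \<noteq> 0" using assms unfolding w_def by simp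
  have "((\<lambda>t. norm (w t)) has_derivative (\<lambda>h. (h *\<^sub>R dv u y) \<bullet> sgn (w y))) (at y)"
    by (rule has_derivative_compose[OF wd[unfolded has_vector_derivative_def] has_derivative_norm[OF w0]])
  then have rd: "((\<lambda>t. norm (w t)) has_real_derivative (dv u y \<bullet> sgn (w y))) (at y)"
    unfolding has_field_derivative_def o_def
    by (rule has_derivative_eq_rhs) (auto simp: fun_eq_iff inner_commute)
  have "((\<lambda>t. (1 / norm (w t)) *\<^sub>R w t) has_vector_derivative
      ((1 / norm (w y)) *\<^sub>R dv u y + ((0 * norm (w y) - 1 * (dv u y \<bullet> sgn (w y))) / (norm (w y) * norm (w y))) *\<^sub>R w y)) (at y)"
    by (rule has_vector_derivative_scaleR[OF DERIV_divide[OF DERIV_const rd] wd]) (use w0 in simp)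
  moreover have "(1 / norm (w y)) *\<^sub>R dv u y + ((0 * norm (w y) - 1 * (dv u y \<bullet> sgn (w y))) / (norm (w y) * norm (w y))) *\<^sub>R w y
      = dir_deriv x y"
    unfolding dir_deriv_def w_def[symmetric] using w0
    by (simp add: sgn_div_norm inner_scaleR_left inner_scaleR_right power3_eq_cube algebra_simps divide_simps inner_commute)
  moreover have "(\<lambda>t. (1 / norm (w t)) *\<^sub>R w t) = dir x"
    unfolding dir_def w_def sgn_eq_scaleR_norm by auto
  ultimately show ?thesis by simp
qed

lemma continuous_on_dir_deriv:
  assumes "\<And>y. y \<in> S \<Longrightarrow> u y \<noteq> u x"
  shows "continuous_on S (dir_deriv x)"
proof -
  have "\<And>y. y \<in> S \<Longrightarrow> norm (u y - u x) \<noteq> 0" using assms by simp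
  then show ?thesis unfolding dir_deriv_def
    by (intro continuous_intros continuous_on_u continuous_on_dv) auto
qed

lemma norm_dir_deriv:
  assumes "u y \<noteq> u x"
  shows "norm (dir_deriv x y) = wedge_norm (dv u y) (u x - u y) / norm (u x - u y) ^ 2"
proof -
  define w where "w = u y - u x"
  define p where "p = dv u y"
  define r where "r = norm w"
  have r0: "r > 0" using assms unfolding r_def w_def by simp
  have Dw: "dir_deriv x y = (1 / r) *\<^sub>R p - ((w \<bullet> p) / r ^ 3) *\<^sub>R w"
    unfolding dir_deriv_def w_def p_def r_def by simp
  have ww: "w \<bullet> w = r ^ 2" unfolding r_def by (simp add: power2_norm_eq_inner)
  have "(norm (dir_deriv x y))^2 = dir_deriv x y \<bullet> dir_deriv x y" by (simp add: power2_norm_eq_inner)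
  also have "\<dots> = (p \<bullet> p) / r^2 - 2 * (w \<bullet> p)^2 / r^4 + (w \<bullet> p)^2 * (w \<bullet> w) / r^6"
    unfolding Dw
    by (simp add: inner_diff_left inner_diff_right inner_commute power2_eq_square algebra_simps power_def divide_simps)
  also have "\<dots> = ((p \<bullet> p) * r^2 - (w \<bullet> p)^2) / r^4"
    unfolding ww using r0 by (simp add: divide_simps) (simp add: algebra_simps power_def)
  finally have n2: "(norm (dir_deriv x y))^2 = ((norm p)^2 * r^2 - (w \<bullet> p)^2) / r^4"
    by (simp add: power2_norm_eq_inner)
  have r4: "sqrt (r^4) = r^2"
  proof -
    have "r^4 = (r^2)^2" by simp
    then show ?thesis by (simp only: real_sqrt_abs) simp
  qed
  have "norm (dir_deriv x y) = sqrt ((norm (dir_deriv x y))^2)" by simp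
  also have "\<dots> = sqrt ((norm p)^2 * r^2 - (w \<bullet> p)^2) / r^2"
    unfolding n2 using r0 by (simp add: real_sqrt_divide r4)
  also have "sqrt ((norm p)^2 * r^2 - (w \<bullet> p)^2) = wedge_norm (dv u y) (u x - u y)"
  proof -
    have "u x - u y = - w" unfolding w_def by simp
    then show ?thesis unfolding wedge_norm_def p_def r_def
      by (simp only: norm_minus_cancel inner_minus_right power2_minus inner_commute[of "dv u y" w])
  qed
  also have "r = norm (u x - u y)" unfolding r_def w_def by (simp add: norm_minus_commute)
  finally show ?thesis .
qed

lemma dir_variation_le:
  assumes ab: "\<alpha> \<le> \<beta>" and ne: "\<And>y. y \<in> {\<alpha>..\<beta>} \<Longrightarrow> u y \<noteq> u x"
  shows "(\<lambda>y. norm (dir_deriv x y)) integrable_on {\<alpha>..\<beta>}"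
    and "norm (dir x \<beta> - dir x \<alpha>) \<le> integral {\<alpha>..\<beta>} (\<lambda>y. norm (dir_deriv x y))"
proof -
  have c: "continuous_on {\<alpha>..\<beta>} (dir_deriv x)" by (rule continuous_on_dir_deriv[OF ne])
  show i: "(\<lambda>y. norm (dir_deriv x y)) integrable_on {\<alpha>..\<beta>}"
    by (rule integrable_continuous_interval) (intro continuous_intros c)
  have "(dir_deriv x has_integral (dir x \<beta> - dir x \<alpha>)) {\<alpha>..\<beta>}"
    by (rule fundamental_theorem_of_calculus[OF ab])
      (use dir_has_vector_derivative ne has_vector_derivative_at_within in blast)
  then show "norm (dir x \<beta> - dir x \<alpha>) \<le> integral {\<alpha>..\<beta>} (\<lambda>y. norm (dir_deriv x y))"
    using integral_norm_bound_integral[OF _ i, of "dir_deriv x"]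
    by (metis integral_unique has_integral_integrable order_refl)
qed

lemma dir_opposite_tendsto: "((\<lambda>e. dir x (x + e) + dir x (x - e)) \<longlongrightarrow> 0) (at_right 0)"
proof -
  define D where "D = dv u x"
  have D0: "D \<noteq> 0" using dv_ge[of x] lam_pos unfolding D_def by auto
  have Q1: "((\<lambda>h. (1/h) *\<^sub>R (u (x + h) - u x)) \<longlongrightarrow> D) (at 0)"
    using has_vector_derivative_quotient_tendsto[OF u_has_vector_derivative] unfolding D_def .
  have "((\<lambda>t. u (x - t)) has_vector_derivative - D) (at 0)"
  proof -
    have d1: "((\<lambda>t. x - t) has_vector_derivative (-1)) (at 0)"
      by (auto intro!: derivative_eq_intros simp: has_real_derivative_iff_has_vector_derivative[symmetric])
    have "((u \<circ> (\<lambda>t. x - t)) has_vector_derivative ((-1) *\<^sub>R dv u (x - 0))) (at 0)"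
      by (rule vector_diff_chain_at[OF d1]) (simp add: u_has_vector_derivative)
    then show ?thesis unfolding D_def by (simp add: o_def)
  qed
  then have Q2: "((\<lambda>h. (1/h) *\<^sub>R (u (x - h) - u x)) \<longlongrightarrow> - D) (at 0)"
    using has_vector_derivative_quotient_tendsto by fastforce
  have le: "at_right (0::real) \<le> at 0" by (simp add: at_le)
  have "((\<lambda>e. sgn ((1/e) *\<^sub>R (u (x + e) - u x)) + sgn ((1/e) *\<^sub>R (u (x - e) - u x))) \<longlongrightarrow> sgn D + sgn (- D)) (at_right 0)"
    by (intro tendsto_add tendsto_sgn tendsto_mono[OF le Q1] tendsto_mono[OF le Q2]) (use D0 in auto)
  moreover have "sgn D + sgn (- D) = 0" by (simp add: sgn_minus)
  moreover have "\<forall>\<^sub>F e in at_right 0. sgn ((1/e) *\<^sub>R (u (x + e) - u x)) + sgn ((1/e) *\<^sub>R (u (x - e) - u x))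
      = dir x (x + e) + dir x (x - e)"
    by (rule eventually_at_rightI[where b=1]) (auto simp: dir_def sgn_scaleR)
  ultimately show ?thesis using tendsto_cong by force
qed

end

section \<open>Tangent-point energy and straightness\<close>

text \<open>Constants of the descent in \<open>deficit_descent_step\<close>: after \<open>k\<close> steps the arc has length at
  most \<open>(3/4)^k * h\<close> and chord deficit \<open>deficit q \<eta> k \<ge> \<eta>/2\<close>.  The ratio is chosen so that the
  energy threshold \<open>deficit_gap q \<eta> k powr q * ((3/4)^k * h) powr (2 - q)\<close> of step \<open>k\<close> does
  not depend on \<open>k\<close>.\<close>

definition descent_ratio :: "real \<Rightarrow> real" where
  "descent_ratio q = (3/4) powr ((q - 2) / q)"

definition deficit :: "real \<Rightarrow> real \<Rightarrow> nat \<Rightarrow> real" where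
  "deficit q \<eta> k = \<eta> / 2 + \<eta> / 2 * descent_ratio q ^ k"

definition deficit_gap :: "real \<Rightarrow> real \<Rightarrow> nat \<Rightarrow> real" where
  "deficit_gap q \<eta> k = (1 - descent_ratio q) * \<eta> / 2 * descent_ratio q ^ k"

definition energy_const :: "real \<Rightarrow> real \<Rightarrow> real" where
  "energy_const q \<eta> = deficit_gap q \<eta> 0 powr q / 2"

lemma descent_ratio_pos: "descent_ratio q > 0"
  unfolding descent_ratio_def by simp

lemma descent_ratio_less_1:
  assumes "q > 2"
  shows "descent_ratio q < 1"
proof -
  have "(3/4::real) powr ((q - 2) / q) < 1 powr ((q - 2) / q)"
    by (rule powr_less_mono2) (use assms in auto)
  then show ?thesis unfolding descent_ratio_def by simp
qed

lemma deficit_0: "deficit q \<eta> 0 = \<eta>"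
  unfolding deficit_def by simp

lemma deficit_ge: "\<eta> > 0 \<Longrightarrow> \<eta> / 2 \<le> deficit q \<eta> k"
  unfolding deficit_def using descent_ratio_pos[of q] by simp

lemma deficit_diff_Suc: "deficit q \<eta> k - deficit q \<eta> (Suc k) = deficit_gap q \<eta> k"
  unfolding deficit_def deficit_gap_def by (simp add: algebra_simps)

lemma deficit_gap_pos: "q > 2 \<Longrightarrow> \<eta> > 0 \<Longrightarrow> deficit_gap q \<eta> k > 0"
  unfolding deficit_gap_def using descent_ratio_less_1 descent_ratio_pos by simp

lemma energy_const_pos: "q > 2 \<Longrightarrow> \<eta> > 0 \<Longrightarrow> energy_const q \<eta> > 0"
  unfolding energy_const_def using deficit_gap_pos[of q \<eta> 0] by simp

lemma deficit_gap_scaling: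
  assumes "q > 2"
  shows "deficit_gap q \<eta> k powr q * ((3/4::real)^k) powr (2 - q) = deficit_gap q \<eta> 0 powr q"
proof -
  have r: "descent_ratio q ^ k = (3/4) powr ((q - 2) / q * real k)"
    unfolding descent_ratio_def by (simp add: powr_realpow[symmetric] powr_powr)
  have qq: "(q - 2) / q * real k * q = (q - 2) * real k" using assms by (simp add: field_simps)
  have "(descent_ratio q ^ k) powr q = (3/4) powr ((q - 2) * real k)"
    unfolding r powr_powr qq ..
  moreover have "((3/4::real)^k) powr (2 - q) = (3/4) powr (real k * (2 - q))"
    by (simp add: powr_realpow[symmetric] powr_powr)
  moreover have "deficit_gap q \<eta> k powr q = deficit_gap q \<eta> 0 powr q * (descent_ratio q ^ k) powr q"
  proof -
    have "deficit_gap q \<eta> k = deficit_gap q \<eta> 0 * descent_ratio q ^ k" unfolding deficit_gap_def by simp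
    then show ?thesis by (simp add: powr_mult)
  qed
  ultimately have "deficit_gap q \<eta> k powr q * ((3/4::real)^k) powr (2 - q)
      = deficit_gap q \<eta> 0 powr q * ((3/4) powr ((q - 2) * real k) * (3/4) powr (real k * (2 - q)))"
    by simp
  also have "(3/4::real) powr ((q - 2) * real k) * (3/4) powr (real k * (2 - q)) = 1"
    by (simp add: powr_add[symmetric] algebra_simps)
  finally show ?thesis by simp
qed

locale tp_curve = regular_curve +
  fixes q :: real
  assumes q_gt_2: "q > 2"
begin

definition tp_density :: "real \<Rightarrow> real \<Rightarrow> real" where
  "tp_density x y = wedge_norm (dv u y) (u x - u y) powr q / norm (u x - u y) powr (2 * q)"

definition inner_energy :: "real \<Rightarrow> ennreal" where
  "inner_energy x = (\<integral>\<^sup>+y. ennreal (tp_density x y) * indicator {0..1} y \<partial>lborel)"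

definition energy :: ennreal where
  "energy = (\<integral>\<^sup>+ x. \<integral>\<^sup>+ y. ennreal (tp_density x y) * indicator {0..1} x * indicator {0..1} y \<partial>lborel \<partial>lborel)"

lemma TP_eq_energy: "TP q u = ennreal (1 / q) * energy"
  unfolding TP_def energy_def tp_density_def ..

lemma energy_le_of_TP_le:
  assumes "TP q u \<le> ennreal M" "M \<ge> 0"
  shows "energy \<le> ennreal (q * M)"
proof -
  have "ennreal q * ennreal (1 / q) = 1" using q_gt_2 by (simp add: ennreal_mult[symmetric])
  then have "energy = ennreal q * TP q u" unfolding TP_eq_energy by (simp add: mult.assoc[symmetric])
  also have "\<dots> \<le> ennreal q * ennreal M" using assms by (intro mult_left_mono) auto
  also have "\<dots> = ennreal (q * M)" using q_gt_2 assms by (simp add: ennreal_mult)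
  finally show ?thesis .
qed

lemma tp_density_nonneg: "0 \<le> tp_density x y"
  unfolding tp_density_def by simp

lemma tp_density_periodic: "periodic1 (tp_density x)"
  unfolding periodic1_def tp_density_def by (simp add: u_shift_1 dv_shift_1)

lemma inner_energy_periodic: "periodic1 inner_energy"
  unfolding periodic1_def inner_energy_def tp_density_def by (simp add: u_shift_1)

lemma tp_density_eq:
  assumes "u y \<noteq> u x"
  shows "tp_density x y = norm (dir_deriv x y) powr q"
proof -
  define r where "r = norm (u x - u y)"
  have r0: "r > 0" using assms unfolding r_def by simp
  have "r powr (2 * q) = (r^2) powr q"
    using r0 by (simp add: powr_powr[symmetric] powr_realpow)
  then have "tp_density x y = wedge_norm (dv u y) (u x - u y) powr q / (r^2) powr q"
    unfolding tp_density_def r_def by simp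
  also have "\<dots> = (wedge_norm (dv u y) (u x - u y) / r^2) powr q"
    using wedge_norm_nonneg r0 by (simp add: powr_divide)
  finally show ?thesis using norm_dir_deriv[OF assms] unfolding r_def by simp
qed

lemma energy_eq_inner_energy: "energy = (\<integral>\<^sup>+ x. inner_energy x * indicator {0..1} x \<partial>lborel)"
proof -
  have "(\<integral>\<^sup>+ y. ennreal (tp_density x y) * indicator {0..1} x * indicator {0..1} y \<partial>lborel)
      = inner_energy x * indicator {0..1} x" for x
    by (cases "x \<in> {0..1}") (auto simp: inner_energy_def)
  then show ?thesis unfolding energy_def by simp
qed

lemma energy_ge:
  assumes "0 \<le> w" "w \<le> 1" "\<And>x. x \<in> {p..p+w} \<Longrightarrow> K \<le> inner_energy x"
  shows "K * ennreal w \<le> energy"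
  unfolding energy_eq_inner_energy by (rule periodic_nn_integral_ge[OF inner_energy_periodic assms])

definition tangent_minorant :: "real \<Rightarrow> real \<Rightarrow> real \<Rightarrow> real" where
  "tangent_minorant c x y = max 0 ((1 - q) * c powr q + q * c powr (q - 1) * norm (dir_deriv x y))"

lemma tangent_minorant_le:
  assumes "c > 0" "u y \<noteq> u x"
  shows "tangent_minorant c x y \<le> tp_density x y"
proof -
  have "(1 - q) * c powr q + q * c powr (q - 1) * norm (dir_deriv x y) \<le> norm (dir_deriv x y) powr q"
    by (rule powr_ge_tangent) (use q_gt_2 assms in auto)
  then show ?thesis unfolding tangent_minorant_def tp_density_eq[OF assms(2)] using tp_density_nonneg by simp
qed

lemma tangent_minorant_integral_ge:
  assumes ab: "\<alpha> \<le> \<beta>" and ne: "\<And>y. y \<in> {\<alpha>..\<beta>} \<Longrightarrow> u y \<noteq> u x"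
  shows "(tangent_minorant c x has_integral integral {\<alpha>..\<beta>} (tangent_minorant c x)) {\<alpha>..\<beta>}"
    and "(\<beta> - \<alpha>) * ((1 - q) * c powr q) + q * c powr (q - 1) * norm (dir x \<beta> - dir x \<alpha>)
      \<le> integral {\<alpha>..\<beta>} (tangent_minorant c x)"
proof -
  have cD: "continuous_on {\<alpha>..\<beta>} (dir_deriv x)" by (rule continuous_on_dir_deriv[OF ne])
  have li: "tangent_minorant c x integrable_on {\<alpha>..\<beta>}"
    unfolding tangent_minorant_def by (rule integrable_continuous_interval) (intro continuous_intros cD)
  then show "(tangent_minorant c x has_integral integral {\<alpha>..\<beta>} (tangent_minorant c x)) {\<alpha>..\<beta>}" by blast
  note var = dir_variation_le[OF ab ne]
  have affine: "((\<lambda>y. (1 - q) * c powr q + q * c powr (q - 1) * norm (dir_deriv x y)) has_integral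
       ((\<beta> - \<alpha>) * ((1 - q) * c powr q) + q * c powr (q - 1) * integral {\<alpha>..\<beta>} (\<lambda>y. norm (dir_deriv x y)))) {\<alpha>..\<beta>}"
    using has_integral_add[OF has_integral_const_real[of "(1 - q) * c powr q" \<alpha> \<beta>]
        has_integral_mult_right[OF integrable_integral[OF var(1)], of "q * c powr (q - 1)"]] ab
    by (simp add: mult.commute)
  have "(\<beta> - \<alpha>) * ((1 - q) * c powr q) + q * c powr (q - 1) * integral {\<alpha>..\<beta>} (\<lambda>y. norm (dir_deriv x y))
      \<le> integral {\<alpha>..\<beta>} (tangent_minorant c x)"
    using integral_le[OF has_integral_integrable[OF affine] li] integral_unique[OF affine]
    by (simp add: tangent_minorant_def)
  moreover have "q * c powr (q - 1) * norm (dir x \<beta> - dir x \<alpha>)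
      \<le> q * c powr (q - 1) * integral {\<alpha>..\<beta>} (\<lambda>y. norm (dir_deriv x y))"
    by (rule mult_left_mono[OF var(2)]) (use q_gt_2 in \<open>auto intro!: mult_nonneg_nonneg\<close>)
  ultimately show "(\<beta> - \<alpha>) * ((1 - q) * c powr q) + q * c powr (q - 1) * norm (dir x \<beta> - dir x \<alpha>)
      \<le> integral {\<alpha>..\<beta>} (tangent_minorant c x)"
    by linarith
qed


lemma inner_energy_ge_two_arcs:
  assumes ord: "\<alpha> \<le> a1" "a1 \<le> b1" "b1 \<le> \<beta>" "\<beta> - \<alpha> < 1"
    and ne: "\<And>y. y \<in> {\<alpha>..a1} \<union> {b1..\<beta>} \<Longrightarrow> u y \<noteq> u x" and c: "c > 0"
  shows "ennreal ((\<beta> - \<alpha>) * ((1 - q) * c powr q)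
      + q * c powr (q - 1) * (norm (dir x a1 - dir x \<alpha>) + norm (dir x \<beta> - dir x b1))) \<le> inner_energy x"
proof -
  have ne1: "\<And>y. y \<in> {\<alpha>..a1} \<Longrightarrow> u y \<noteq> u x" and ne2: "\<And>y. y \<in> {b1..\<beta>} \<Longrightarrow> u y \<noteq> u x"
    using ne by blast+
  note arc1 = tangent_minorant_integral_ge[OF ord(1) ne1, of c]
    and arc2 = tangent_minorant_integral_ge[OF ord(3) ne2, of c]
  define I1 where "I1 = integral {\<alpha>..a1} (tangent_minorant c x)"
  define I2 where "I2 = integral {b1..\<beta>} (tangent_minorant c x)"
  define g where "g y = (if y \<in> {\<alpha>..a1} \<union> {b1..\<beta>} then tangent_minorant c x y else 0)" for y
  have g1: "(g has_integral I1) {\<alpha>..a1}"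
    by (rule has_integral_spike_finite[where S="{}" and f="tangent_minorant c x"])
      (use arc1(1) in \<open>auto simp: g_def I1_def\<close>)
  have g2: "(g has_integral 0) {a1..b1}"
    by (rule has_integral_spike_finite[where S="{a1, b1}" and f="\<lambda>_. 0"]) (use ord in \<open>auto simp: g_def\<close>)
  have g3: "(g has_integral I2) {b1..\<beta>}"
    by (rule has_integral_spike_finite[where S="{}" and f="tangent_minorant c x"])
      (use arc2(1) in \<open>auto simp: g_def I2_def\<close>)
  have g12: "(g has_integral (I1 + 0)) {\<alpha>..b1}" by (rule has_integral_combine[OF _ _ g1 g2]) (use ord in auto)
  have g_integral: "(g has_integral (I1 + 0 + I2)) {\<alpha>..\<beta>}"
    by (rule has_integral_combine[OF _ _ g12 g3]) (use ord in auto)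
  define K where "K = (1 - q) * c powr q"
  define B where "B = q * c powr (q - 1)"
  have "(b1 - a1) * K \<le> 0" unfolding K_def using q_gt_2 ord by (intro mult_nonneg_nonpos mult_nonpos_nonneg) auto
  moreover have "(\<beta> - \<alpha>) * K = (a1 - \<alpha>) * K + (b1 - a1) * K + (\<beta> - b1) * K" by (simp add: algebra_simps)
  ultimately have "(\<beta> - \<alpha>) * K + B * (norm (dir x a1 - dir x \<alpha>) + norm (dir x \<beta> - dir x b1)) \<le> I1 + 0 + I2"
    using arc1(2) arc2(2) unfolding K_def B_def I1_def I2_def by (simp add: distrib_left)
  moreover have "ennreal (I1 + 0 + I2) \<le> inner_energy x"
    unfolding inner_energy_def
  proof (rule has_integral_le_periodic_nn_integral[OF tp_density_periodic _ _ g_integral])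
    fix y assume "y \<in> {\<alpha>..\<beta>}"
    show "0 \<le> g y" unfolding g_def tangent_minorant_def by simp
    show "g y \<le> tp_density x y"
      using tangent_minorant_le[OF c] ne tp_density_nonneg[of x y] unfolding g_def by auto
  qed (use ord in auto)
  ultimately show ?thesis unfolding K_def B_def by (meson ennreal_leI order.trans)
qed

lemma inner_energy_ge_two_arcs_powr:
  assumes ord: "\<alpha> \<le> a1" "a1 \<le> b1" "b1 \<le> \<beta>" "\<beta> - \<alpha> < 1"
    and ne: "\<And>y. y \<in> {\<alpha>..a1} \<union> {b1..\<beta>} \<Longrightarrow> u y \<noteq> u x"
    and s: "0 < s" "s \<le> norm (dir x a1 - dir x \<alpha>) + norm (dir x \<beta> - dir x b1)"
  shows "ennreal ((\<beta> - \<alpha>) powr (1 - q) * s powr q) \<le> inner_energy x"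
proof -
  have h: "\<beta> - \<alpha> > 0"
  proof (rule ccontr)
    assume "\<not> ?thesis"
    then have "a1 = \<alpha>" "b1 = \<alpha>" "\<beta> = \<alpha>" using ord by auto
    then show False using s by simp
  qed
  define c where "c = s / (\<beta> - \<alpha>)"
  have c0: "c > 0" using s h unfolding c_def by simp
  have "q * c powr (q - 1) * s
      \<le> q * c powr (q - 1) * (norm (dir x a1 - dir x \<alpha>) + norm (dir x \<beta> - dir x b1))"
    by (rule mult_left_mono[OF s(2)]) (use q_gt_2 in \<open>auto intro!: mult_nonneg_nonneg\<close>)
  then have "(\<beta> - \<alpha>) powr (1 - q) * s powr q \<le> (\<beta> - \<alpha>) * ((1 - q) * c powr q)
      + q * c powr (q - 1) * (norm (dir x a1 - dir x \<alpha>) + norm (dir x \<beta> - dir x b1))"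
    using tangent_value_at_ratio[OF h s(1), of q] unfolding c_def by linarith
  then show ?thesis using inner_energy_ge_two_arcs[OF ord ne c0] by (meson ennreal_leI order.trans)
qed

lemma inner_energy_ge_dir_variation:
  assumes "\<alpha> \<le> \<beta>" "\<beta> - \<alpha> < 1" "\<And>y. y \<in> {\<alpha>..\<beta>} \<Longrightarrow> u y \<noteq> u x"
    and "0 < s" "s \<le> norm (dir x \<beta> - dir x \<alpha>)"
  shows "ennreal ((\<beta> - \<alpha>) powr (1 - q) * s powr q) \<le> inner_energy x"
  by (rule inner_energy_ge_two_arcs_powr[of \<alpha> \<beta> \<beta> \<beta>]) (use assms in auto)

lemma inner_energy_ge_dir_sum:
  assumes ax: "\<alpha> < x" "x < \<beta>" "\<beta> - \<alpha> < 1" and s: "0 < s" "s < norm (dir x \<alpha> + dir x \<beta>)"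
  shows "ennreal ((\<beta> - \<alpha>) powr (1 - q) * s powr q) \<le> inner_energy x"
proof -
  \<comment> \<open>near the singularity \<open>y = x\<close> the directions \<open>dir x (x \<plusminus> e)\<close> nearly cancel, so cutting out
    \<open>[x - e, x + e]\<close> loses almost nothing of \<open>norm (dir x \<alpha> + dir x \<beta>)\<close>\<close>
  have "((\<lambda>e. norm (dir x (x + e) + dir x (x - e))) \<longlongrightarrow> 0) (at_right 0)"
    using tendsto_norm_zero[OF dir_opposite_tendsto] .
  then have "\<forall>\<^sub>F e in at_right 0. norm (dir x (x + e) + dir x (x - e)) < norm (dir x \<alpha> + dir x \<beta>) - s"
    by (rule order_tendstoD(2)) (use s in simp)
  then obtain e where e: "0 < e" "e < min (x - \<alpha>) (\<beta> - x)"
      "norm (dir x (x + e) + dir x (x - e)) < norm (dir x \<alpha> + dir x \<beta>) - s"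
    using eventually_at_right_0_witness[of _ "min (x - \<alpha>) (\<beta> - x)"] ax by auto
  define A1 where "A1 = dir x (x - e) - dir x \<alpha>"
  define A2 where "A2 = dir x \<beta> - dir x (x + e)"
  define D where "D = dir x (x + e) + dir x (x - e)"
  have "dir x \<alpha> + dir x \<beta> = - A1 + A2 + D" unfolding A1_def A2_def D_def by (simp add: algebra_simps)
  then have "norm (dir x \<alpha> + dir x \<beta>) = norm (- A1 + A2 + D)" by simp
  also have "\<dots> \<le> norm (- A1 + A2) + norm D" by (rule norm_triangle_ineq)
  also have "\<dots> \<le> norm A1 + norm A2 + norm D" using norm_triangle_ineq[of "- A1" A2] by simp
  finally have "s \<le> norm A1 + norm A2" using e(3) unfolding D_def by linarith
  then show ?thesis
  proof (intro inner_energy_ge_two_arcs_powr[of \<alpha> "x - e" "x + e" \<beta>])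
    show "u y \<noteq> u x" if "y \<in> {\<alpha>..x - e} \<union> {x + e..\<beta>}" for y
      by (rule u_neq) (use that e ax in auto)
  qed (use e ax s A1_def A2_def in auto)
qed

lemma energy_ge_of_dir_sum:
  assumes ab: "\<alpha> < \<beta>" "\<beta> - \<alpha> \<le> 1/2" and s: "0 < s"
    and sum: "\<And>x. x \<in> {\<alpha> + (\<beta> - \<alpha>)/4 .. \<beta> - (\<beta> - \<alpha>)/4} \<Longrightarrow> s < norm (dir x \<alpha> + dir x \<beta>)"
  shows "ennreal ((\<beta> - \<alpha>) powr (1 - q) * s powr q * ((\<beta> - \<alpha>) / 2)) \<le> energy"
proof -
  have "ennreal ((\<beta> - \<alpha>) powr (1 - q) * s powr q) * ennreal ((\<beta> - \<alpha>) / 2) \<le> energy"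
  proof (rule energy_ge[where p="\<alpha> + (\<beta> - \<alpha>)/4"])
    fix x assume x: "x \<in> {\<alpha> + (\<beta> - \<alpha>) / 4..\<alpha> + (\<beta> - \<alpha>) / 4 + (\<beta> - \<alpha>) / 2}"
    then have mid: "x \<in> {\<alpha> + (\<beta> - \<alpha>)/4 .. \<beta> - (\<beta> - \<alpha>)/4}" by (auto simp: field_simps)
    show "ennreal ((\<beta> - \<alpha>) powr (1 - q) * s powr q) \<le> inner_energy x"
      by (rule inner_energy_ge_dir_sum) (use sum[OF mid] mid ab s in \<open>auto simp: field_simps\<close>)
  qed (use ab in auto)
  then show ?thesis by (simp add: ennreal_mult'[symmetric])
qed

lemma exists_small_dir_sum:
  assumes \<eta>: "0 < \<eta>" and h: "0 < h" "h \<le> 1/2"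
    and ab: "a < b" "b - a \<le> (3/4)^k * h"
    and small: "energy < ennreal (energy_const q \<eta> * h powr (2 - q))"
  shows "\<exists>Z \<in> {a + (b - a)/4 .. b - (b - a)/4}. norm (dir Z a + dir Z b) \<le> deficit_gap q \<eta> k"
proof (rule ccontr)
  define S where "S = deficit_gap q \<eta> k"
  assume "\<not> ?thesis"
  then have sum: "\<And>x. x \<in> {a + (b - a)/4 .. b - (b - a)/4} \<Longrightarrow> S < norm (dir x a + dir x b)"
    unfolding S_def by force
  have S0: "S > 0" unfolding S_def using deficit_gap_pos q_gt_2 \<eta> by simp
  have "(3/4::real)^k * h \<le> h" using h by (simp add: mult_left_le_one_le power_le_one)
  then have short: "b - a \<le> 1/2" using ab h by linarith
  have "((3/4)^k * h) powr (2 - q) \<le> (b - a) powr (2 - q)"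
    by (rule powr_mono2') (use q_gt_2 ab in auto)
  then have "S powr q * ((3/4::real)^k) powr (2 - q) * h powr (2 - q) \<le> S powr q * (b - a) powr (2 - q)"
    by (simp add: powr_mult mult.assoc mult_left_mono)
  then have "energy_const q \<eta> * h powr (2 - q) \<le> S powr q * (b - a) powr (2 - q) / 2"
    unfolding energy_const_def S_def deficit_gap_scaling[OF q_gt_2] by simp
  also have "\<dots> = (b - a) powr (1 - q) * S powr q * ((b - a) / 2)"
  proof -
    have p: "(b - a) powr (2 - q) = (b - a) powr (1 - q) * (b - a)" using powr_add[of "b - a" "1 - q" 1] ab by simp
    show ?thesis unfolding p by (simp add: field_simps)
  qed
  also have "ennreal \<dots> \<le> energy" by (rule energy_ge_of_dir_sum[OF ab(1) short S0 sum])
  finally show False using small by (simp add: ennreal_leI leD)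
qed

lemma deficit_descent_step:
  assumes \<eta>: "0 < \<eta>" and h: "0 < h" "h \<le> 1/2"
    and ab: "a < b" "b - a \<le> (3/4)^k * h"
    and deficient: "norm (u b - u a) \<le> (1 - deficit q \<eta> k) * arclen a b"
    and small: "energy < ennreal (energy_const q \<eta> * h powr (2 - q))"
  shows "\<exists>a' b'. a' < b' \<and> b' - a' \<le> (3/4)^(Suc k) * h
    \<and> norm (u b' - u a') \<le> (1 - deficit q \<eta> (Suc k)) * arclen a' b'"
proof -
  obtain Z where Z: "Z \<in> {a + (b - a)/4 .. b - (b - a)/4}" "norm (dir Z a + dir Z b) \<le> deficit_gap q \<eta> k"
    using exists_small_dir_sum[OF \<eta> h ab small] by blast
  have aZ: "a < Z" "Z < b" using Z(1) ab by (auto simp: field_simps)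
  have "(3/4::real)^k * h \<le> h" using h by (simp add: mult_left_le_one_le power_le_one)
  then have short: "b - a < 1" using ab h by linarith
  have uZ: "u a \<noteq> u Z" "u b \<noteq> u Z" by (rule u_neq; use aZ short in auto)+
  define n1 where "n1 = norm (u Z - u a)"
  define n2 where "n2 = norm (u b - u Z)"
  have "n1 + n2 \<le> norm (u b - u a) + norm (dir Z a + dir Z b) * n1"
    using triangle_excess_le_sgn_sum[OF uZ] unfolding n1_def n2_def dir_def by (simp add: norm_minus_commute)
  moreover have "n1 \<le> arclen a b"
    using chord_le_arclen[of a Z] arclen_add[of a Z b] arclen_nonneg[of Z b] aZ unfolding n1_def by simp
  then have "norm (dir Z a + dir Z b) * n1 \<le> deficit_gap q \<eta> k * arclen a b"
    by (rule mult_mono[OF Z(2)]) (use n1_def deficit_gap_pos[OF q_gt_2 \<eta>, of k] in auto)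
  moreover have "(1 - deficit q \<eta> (Suc k)) * arclen a b
      = (1 - deficit q \<eta> k) * arclen a b + deficit_gap q \<eta> k * arclen a b"
    using deficit_diff_Suc[of q \<eta> k] by (simp add: algebra_simps)
  ultimately have "n1 + n2 \<le> (1 - deficit q \<eta> (Suc k)) * arclen a b" using deficient by linarith
  moreover have "arclen a b = arclen a Z + arclen Z b" using arclen_add[of a Z b] aZ by simp
  ultimately have split: "n1 + n2 \<le> (1 - deficit q \<eta> (Suc k)) * arclen a Z + (1 - deficit q \<eta> (Suc k)) * arclen Z b"
    by (simp add: distrib_left)
  have "Z - a \<le> 3/4 * (b - a)" "b - Z \<le> 3/4 * (b - a)" using Z(1) by (auto simp: field_simps)
  moreover have "3/4 * (b - a) \<le> (3/4)^(Suc k) * h" using ab by simp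
  ultimately have len: "Z - a \<le> (3/4)^(Suc k) * h" "b - Z \<le> (3/4)^(Suc k) * h" by linarith+
  show ?thesis
  proof (cases "n1 \<le> (1 - deficit q \<eta> (Suc k)) * arclen a Z")
    case True
    then show ?thesis using aZ len unfolding n1_def by (intro exI[of _ a] exI[of _ Z]) auto
  next
    case False
    then have "n2 \<le> (1 - deficit q \<eta> (Suc k)) * arclen Z b" using split by linarith
    then show ?thesis using aZ len unfolding n2_def by (intro exI[of _ Z] exI[of _ b]) auto
  qed
qed

lemma chord_deficit_nested:
  assumes \<eta>: "0 < \<eta>" and ab: "\<alpha> < \<beta>" "\<beta> - \<alpha> \<le> 1/2"
    and deficient: "norm (u \<beta> - u \<alpha>) \<le> (1 - \<eta>) * arclen \<alpha> \<beta>"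
    and small: "energy < ennreal (energy_const q \<eta> * (\<beta> - \<alpha>) powr (2 - q))"
  shows "\<exists>a b. a < b \<and> b - a \<le> (3/4)^k * (\<beta> - \<alpha>) \<and> norm (u b - u a) \<le> (1 - deficit q \<eta> k) * arclen a b"
proof (induction k)
  case 0
  show ?case using ab deficient unfolding deficit_0 by (intro exI[of _ \<alpha>] exI[of _ \<beta>]) auto
next
  case (Suc k)
  then obtain a b where step: "a < b" "b - a \<le> (3/4)^k * (\<beta> - \<alpha>)"
      "norm (u b - u a) \<le> (1 - deficit q \<eta> k) * arclen a b"
    by blast
  have "0 < \<beta> - \<alpha>" using ab by simp
  from deficit_descent_step[OF \<eta> this ab(2) step small] show ?case .
qed

lemma energy_ge_of_chord_deficit:
  assumes \<eta>: "0 < \<eta>" "\<eta> \<le> 1" and ab: "\<alpha> < \<beta>" "\<beta> - \<alpha> \<le> 1/2"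
    and deficient: "norm (u \<beta> - u \<alpha>) \<le> (1 - \<eta>) * arclen \<alpha> \<beta>"
  shows "ennreal (energy_const q \<eta> * (\<beta> - \<alpha>) powr (2 - q)) \<le> energy"
proof (rule ccontr)
  assume "\<not> ?thesis"
  then have small: "energy < ennreal (energy_const q \<eta> * (\<beta> - \<alpha>) powr (2 - q))" by (simp add: not_le)
  obtain d where d: "d > 0"
    and straight: "\<And>a b. a < b \<Longrightarrow> b - a \<le> d \<Longrightarrow> (1 - \<eta> / 2) * arclen a b < norm (u b - u a)"
    using chord_gt_arclen_locally[of "\<eta> / 2"] \<eta> by auto
  obtain k where "(3/4::real)^k < d / (\<beta> - \<alpha>)" using real_arch_pow_inv[of "d / (\<beta> - \<alpha>)" "3/4"] d ab by auto
  then have k: "(3/4::real)^k * (\<beta> - \<alpha>) < d" using ab by (simp add: field_simps)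
  obtain a b where ab': "a < b" "b - a \<le> (3/4)^k * (\<beta> - \<alpha>)"
      "norm (u b - u a) \<le> (1 - deficit q \<eta> k) * arclen a b"
    using chord_deficit_nested[OF \<eta>(1) ab deficient small] by blast
  have "(1 - deficit q \<eta> k) * arclen a b \<le> (1 - \<eta> / 2) * arclen a b"
    using deficit_ge[OF \<eta>(1)] arclen_nonneg[of a b] ab' by (intro mult_right_mono) auto
  then show False using straight[of a b] ab' k by linarith
qed

lemma chord_gt_arclen_of_small_energy:
  assumes \<eta>: "0 < \<eta>" "\<eta> \<le> 1" and h0: "0 < h0" "h0 \<le> 1/2"
    and small: "energy < ennreal (energy_const q \<eta> * h0 powr (2 - q))"
    and ab: "\<alpha> < \<beta>" "\<beta> - \<alpha> \<le> h0"
  shows "(1 - \<eta>) * arclen \<alpha> \<beta> < norm (u \<beta> - u \<alpha>)"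
proof (rule ccontr)
  assume "\<not> ?thesis"
  then have "ennreal (energy_const q \<eta> * (\<beta> - \<alpha>) powr (2 - q)) \<le> energy"
    using energy_ge_of_chord_deficit[OF \<eta> ab(1)] ab h0 by simp
  moreover have "h0 powr (2 - q) \<le> (\<beta> - \<alpha>) powr (2 - q)"
    by (rule powr_mono2') (use q_gt_2 ab in auto)
  then have "energy_const q \<eta> * h0 powr (2 - q) \<le> energy_const q \<eta> * (\<beta> - \<alpha>) powr (2 - q)"
    using energy_const_pos[OF q_gt_2 \<eta>(1)] by simp
  ultimately show False using small by (meson ennreal_leI order.trans leD)
qed


lemma chord_directions_opposite:
  assumes \<eta>: "0 < \<eta>" "\<eta> \<le> 1/2" "\<eta> * (128 * Lam^2) \<le> lam^2"
    and h0: "0 < h0" "h0 \<le> 1/2" and small: "energy < ennreal (energy_const q \<eta> * h0 powr (2 - q))"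
    and t: "0 < t" "2 * t \<le> h0"
  shows "lam * t / 2 \<le> norm (u (b - t) - u b)" "lam * t / 2 \<le> norm (u (b + t) - u b)"
    and "norm (sgn (u (b - t) - u b) + sgn (u (b + t) - u b)) \<le> 1/2"
proof -
  define v1 where "v1 = u (b - t) - u b"
  define v2 where "v2 = u (b + t) - u b"
  have straight: "(1 - \<eta>) * arclen a b' < norm (u b' - u a)" if "a < b'" "b' - a \<le> 2 * t" for a b'
    by (rule chord_gt_arclen_of_small_energy[OF \<eta>(1) _ h0 small]) (use \<eta> that t in auto)
  have lower: "lam * t / 2 \<le> norm (u b' - u a)" if "a < b'" "b' - a = t" for a b'
  proof -
    have "1/2 * (lam * t) \<le> (1 - \<eta>) * arclen a b'"
      by (rule mult_mono) (use arclen_ge[of a b'] that \<eta> lam_pos in auto)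
    then show ?thesis using straight[of a b'] that t by simp
  qed
  show r1: "lam * t / 2 \<le> norm (u (b - t) - u b)"
    using lower[of "b - t" b] t by (simp add: norm_minus_commute)
  show r2: "lam * t / 2 \<le> norm (u (b + t) - u b)"
    using lower[of b "b + t"] t by simp
  have pos: "0 < lam * t / 2" using lam_pos t by simp
  have "norm v1 + norm v2 \<le> arclen (b - t) (b + t)"
    using chord_le_arclen[of "b - t" b] chord_le_arclen[of b "b + t"] arclen_add[of "b - t" b "b + t"] t
    unfolding v1_def v2_def by (simp add: norm_minus_commute)
  then have "(1 - \<eta>) * (norm v1 + norm v2) \<le> (1 - \<eta>) * arclen (b - t) (b + t)"
    by (rule mult_left_mono) (use \<eta> in simp)
  moreover have "norm (v1 - v2) = norm (u (b + t) - u (b - t))"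
    unfolding v1_def v2_def by (simp add: norm_minus_commute)
  ultimately have ch: "(1 - \<eta>) * (norm v1 + norm v2) \<le> norm (v1 - v2)"
    using straight[of "b - t" "b + t"] t by simp
  have R: "norm v1 \<le> Lam * t" "norm v2 \<le> Lam * t"
    using chord_le_Lam[of "b - t" b] chord_le_Lam[of "b + t" b] t unfolding v1_def v2_def by auto
  have bound: "32 * \<eta> * (Lam * t)^2 \<le> (lam * t / 2)^2"
  proof -
    have "32 * \<eta> * (Lam * t)^2 = (\<eta> * (128 * Lam^2)) * (t^2 / 4)" by (simp add: power2_eq_square algebra_simps)
    also have "\<dots> \<le> lam^2 * (t^2 / 4)" by (rule mult_right_mono[OF \<eta>(3)]) simp
    also have "\<dots> = (lam * t / 2)^2" by (simp add: power2_eq_square)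
    finally show ?thesis .
  qed
  have "lam * t / 2 \<le> norm v1" "lam * t / 2 \<le> norm v2" using r1 r2 unfolding v1_def v2_def .
  then have "norm (sgn v1 + sgn v2) \<le> 1/2"
    by (rule norm_sgn_add_le_half[OF pos _ _ R _ _ bound ch]) (use \<eta> in auto)
  then show "norm (sgn (u (b - t) - u b) + sgn (u (b + t) - u b)) \<le> 1/2" unfolding v1_def v2_def .
qed

lemma inner_energy_ge_near_opposite_arcs:
  assumes \<eta>: "0 < \<eta>" "\<eta> \<le> 1/2" "\<eta> * (128 * Lam^2) \<le> lam^2"
    and h0: "0 < h0" "h0 \<le> 1/2" and small: "energy < ennreal (energy_const q \<eta> * h0 powr (2 - q))"
    and t: "0 < t" "2 * t \<le> h0"
    and x: "norm (u x - u b) \<le> lam * t / 32" "x < b - t" "b + t < x + 1"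
  shows "ennreal ((2 * t) powr (1 - q)) \<le> inner_energy x"
proof -
  have "1 \<le> norm (dir x (b + t) - dir x (b - t))"
    unfolding dir_def using sgn_diff_ge_of_nearly_opposite[OF _ chord_directions_opposite[OF \<eta> h0 small t]]
      x(1) lam_pos t by simp
  moreover have "u y \<noteq> u x" if "y \<in> {b - t .. b + t}" for y
    by (rule u_neq) (use that x in auto)
  ultimately have "ennreal ((b + t - (b - t)) powr (1 - q) * 1 powr q) \<le> inner_energy x"
    by (intro inner_energy_ge_dir_variation) (use t h0 in auto)
  then show ?thesis by simp
qed

lemma energy_ge_of_short_chord:
  assumes \<eta>: "0 < \<eta>" "\<eta> \<le> 1/2" "\<eta> * (128 * Lam^2) \<le> lam^2"
    and h0: "0 < h0" "h0 \<le> 1/2" and small: "energy < ennreal (energy_const q \<eta> * h0 powr (2 - q))"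
    and ab: "h0 < b - a" "b - a \<le> 1/2"
    and \<delta>: "\<delta> = norm (u b - u a)" "0 < \<delta>" "130 * \<delta> \<le> lam * h0" "130 * \<delta> \<le> Lam * h0"
  shows "ennreal ((2 / Lam) * (128 / lam) powr (1 - q) * \<delta> powr (2 - q)) \<le> energy"
proof -
  \<comment> \<open>every \<open>x\<close> within \<open>\<tau>\<close> of \<open>a\<close> sees the nearly opposite arcs \<open>u [b - t, b]\<close> and \<open>u [b, b + t]\<close>
    at distance \<open>\<le> 2 * \<delta>\<close>, so \<open>dir x\<close> turns by at least 1 on \<open>[b - t, b + t]\<close>\<close>
  define \<tau> where "\<tau> = \<delta> / Lam"
  define t where "t = 64 * (\<delta> / lam)"
  have \<tau>0: "\<tau> > 0" unfolding \<tau>_def using \<delta> Lam_pos by simp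
  have t0: "t > 0" unfolding t_def using \<delta> lam_pos by simp
  have "\<delta> / lam \<le> h0 / 130" "\<delta> / Lam \<le> h0 / 130"
    using \<delta>(3,4) lam_pos Lam_pos by (simp_all add: field_simps)
  then have t2: "2 * t \<le> h0" and tt: "t + \<tau> < h0" and \<tau>1: "2 * \<tau> \<le> 1"
    unfolding t_def \<tau>_def using h0 by linarith+
  have inner: "ennreal ((2 * t) powr (1 - q)) \<le> inner_energy x" if x: "x \<in> {a - \<tau> .. a - \<tau> + 2 * \<tau>}" for x
  proof (rule inner_energy_ge_near_opposite_arcs[OF \<eta> h0 small t0 t2])
    have "Lam * \<bar>x - a\<bar> \<le> Lam * \<tau>" using x Lam_pos by (intro mult_left_mono) auto
    then have "norm (u x - u a) \<le> Lam * \<tau>" using chord_le_Lam[of x a] by linarith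
    then have "norm (u x - u a) \<le> \<delta>" unfolding \<tau>_def using Lam_pos by simp
    then have "norm (u x - u b) \<le> 2 * \<delta>"
      using norm_triangle_ineq[of "u x - u a" "u a - u b"] \<delta>(1) by (simp add: norm_minus_commute)
    also have "2 * \<delta> = lam * t / 32" unfolding t_def using lam_pos by simp
    finally show "norm (u x - u b) \<le> lam * t / 32" .
    show "x < b - t" "b + t < x + 1" using x tt ab h0 by auto
  qed
  have "ennreal ((2 * t) powr (1 - q)) * ennreal (2 * \<tau>) \<le> energy"
    by (rule energy_ge[OF _ \<tau>1 inner]) (use \<tau>0 in auto)
  moreover have "(2 * t) powr (1 - q) * (2 * \<tau>) = (2 / Lam) * (128 / lam) powr (1 - q) * \<delta> powr (2 - q)"
  proof -
    have "(2 * t) powr (1 - q) = ((128 / lam) * \<delta>) powr (1 - q)" unfolding t_def by simp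
    also have "\<dots> = (128 / lam) powr (1 - q) * \<delta> powr (1 - q)" by (rule powr_mult)
    finally have "(2 * t) powr (1 - q) = (128 / lam) powr (1 - q) * \<delta> powr (1 - q)" .
    moreover have "\<delta> powr (2 - q) = \<delta> powr (1 - q) * \<delta>"
      using powr_add[of \<delta> "1 - q" 1] \<delta>(2) by simp
    ultimately show ?thesis unfolding \<tau>_def by (simp add: algebra_simps)
  qed
  ultimately show ?thesis using \<tau>0 by (simp add: ennreal_mult'[symmetric])
qed

lemma chord_lower_bound:
  assumes \<eta>: "0 < \<eta>" "\<eta> \<le> 1/2" "\<eta> * (128 * Lam^2) \<le> lam^2"
    and h0: "0 < h0" "h0 \<le> 1/2" and small: "energy < ennreal (energy_const q \<eta> * h0 powr (2 - q))"
    and \<delta>1: "0 < \<delta>1" "130 * \<delta>1 \<le> lam * h0" "130 * \<delta>1 \<le> Lam * h0"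
    and small': "energy < ennreal ((2 / Lam) * (128 / lam) powr (1 - q) * \<delta>1 powr (2 - q))"
    and ab: "a < b" "b - a \<le> 1/2"
  shows "min (lam / 2) (2 * \<delta>1) * (b - a) \<le> norm (u b - u a)"
proof (cases "b - a \<le> h0")
  case True
  have "1/2 * (lam * (b - a)) \<le> (1 - \<eta>) * arclen a b"
    by (rule mult_mono) (use arclen_ge[of a b] ab \<eta> lam_pos in auto)
  moreover have "min (lam / 2) (2 * \<delta>1) * (b - a) \<le> lam / 2 * (b - a)"
    by (rule mult_right_mono) (use ab in auto)
  ultimately show ?thesis
    using chord_gt_arclen_of_small_energy[OF \<eta>(1) _ h0 small ab(1) True] \<eta> by simp
next
  case False
  define \<delta> where "\<delta> = norm (u b - u a)"
  have \<delta>0: "\<delta> > 0" unfolding \<delta>_def using u_neq[of b a] ab by auto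
  have "\<delta>1 < \<delta>"
  proof (rule ccontr)
    assume "\<not> \<delta>1 < \<delta>"
    then have "ennreal ((2 / Lam) * (128 / lam) powr (1 - q) * \<delta> powr (2 - q)) \<le> energy"
      using energy_ge_of_short_chord[OF \<eta> h0 small _ ab(2) \<delta>_def \<delta>0] False \<delta>1 by simp
    moreover have "\<delta>1 powr (2 - q) \<le> \<delta> powr (2 - q)"
      by (rule powr_mono2') (use q_gt_2 \<delta>0 \<open>\<not> \<delta>1 < \<delta>\<close> in auto)
    then have "(2 / Lam) * (128 / lam) powr (1 - q) * \<delta>1 powr (2 - q)
        \<le> (2 / Lam) * (128 / lam) powr (1 - q) * \<delta> powr (2 - q)"
      by (rule mult_left_mono) (use Lam_pos in simp)
    ultimately show False using small' by (meson ennreal_leI order.trans leD)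
  qed
  moreover have "min (lam / 2) (2 * \<delta>1) * (b - a) \<le> 2 * \<delta>1 * (b - a)"
    by (rule mult_right_mono) (use ab in auto)
  moreover have "2 * \<delta>1 * (b - a) \<le> \<delta>1" using ab \<delta>1 by (simp add: mult.commute mult_left_le)
  ultimately show ?thesis unfolding \<delta>_def by linarith
qed

end

section \<open>The uniform bilipschitz bound\<close>

lemma tp_curve_of_curve_class:
  assumes "u \<in> curve_class q" "\<And>x. lam \<le> norm (dv u x)" "\<And>x. norm (dv u x) \<le> Lam" "lam > 0" "q > 2"
  shows "tp_curve u lam Lam q"
  using assms unfolding curve_class_def W_space_def
  by (intro tp_curve.intro regular_curve.intro tp_curve_axioms.intro) auto

lemma uniform_chord_lower_bound:
  assumes q: "q > 2" and lam: "lam > 0" and Lam: "Lam > 0" and M: "M \<ge> 0"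
  shows "\<exists>C>0. \<forall>u :: real \<Rightarrow> 'a::euclidean_space. tp_curve u lam Lam q \<and> TP q u \<le> ennreal M \<longrightarrow>
    (\<forall>a b. a < b \<longrightarrow> b - a \<le> 1/2 \<longrightarrow> C * (b - a) \<le> norm (u b - u a))"
proof -
  define \<eta> where "\<eta> = min (1/2) (lam^2 / (128 * Lam^2))"
  have \<eta>: "0 < \<eta>" "\<eta> \<le> 1/2" "\<eta> * (128 * Lam^2) \<le> lam^2"
    unfolding \<eta>_def using lam Lam by (auto simp: field_simps min_def)
  obtain h0 where h0: "0 < h0" "h0 \<le> 1/2" "q * M < energy_const q \<eta> * h0 powr (2 - q)"
    using exists_small_powr_gt[OF q energy_const_pos[OF q \<eta>(1)], of "1/2"] by auto
  define C' where "C' = (2 / Lam) * (128 / lam) powr (1 - q)"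
  obtain \<delta>1 where \<delta>1: "0 < \<delta>1" "\<delta>1 \<le> min (lam * h0 / 130) (Lam * h0 / 130)" "q * M < C' * \<delta>1 powr (2 - q)"
    using exists_small_powr_gt[OF q, of C' "min (lam * h0 / 130) (Lam * h0 / 130)" "q * M"] lam Lam h0
    unfolding C'_def by auto
  show ?thesis
  proof (intro exI[of _ "min (lam / 2) (2 * \<delta>1)"] conjI allI impI)
    show "min (lam / 2) (2 * \<delta>1) > 0" using lam \<delta>1 by simp
    fix u :: "real \<Rightarrow> 'a" and a b :: real
    assume u: "tp_curve u lam Lam q \<and> TP q u \<le> ennreal M" and ab: "a < b" "b - a \<le> 1/2"
    interpret tp_curve u lam Lam q using u by blast
    have "energy \<le> ennreal (q * M)" using energy_le_of_TP_le u M by blast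
    then have "energy < ennreal (energy_const q \<eta> * h0 powr (2 - q))"
      and "energy < ennreal (C' * \<delta>1 powr (2 - q))"
      using h0 \<delta>1 q M by (auto simp: ennreal_less_iff intro: le_less_trans)
    then show "min (lam / 2) (2 * \<delta>1) * (b - a) \<le> norm (u b - u a)"
      using chord_lower_bound[OF \<eta> h0(1,2) _ \<delta>1(1) _ _ _ ab] \<delta>1(2) unfolding C'_def by auto
  qed
qed

theorem corollary3p7:
  fixes q :: real and lam Lam M :: real
  assumes "q > 2" and "CARD('n) \<ge> 2"
    and "lam > 0" and "Lam > 0" and "M > 0"
  shows "\<exists>R>0. \<forall>(u :: real \<Rightarrow> real ^ 'n) (v :: real \<Rightarrow> real ^ 'n).
      u \<in> curve_class q \<and> (\<forall>x. lam \<le> norm (dv u x) \<and> norm (dv u x) \<le> Lam)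
      \<and> TP q u \<le> ennreal M
      \<and> v \<in> W_space q \<and> (\<forall>x. norm (dv v x - dv u x) \<le> R)
      \<longrightarrow> bil v \<le> 2 * bil u \<and> bil u < \<infinity>"
proof -
  obtain C where C: "C > 0" and chord: "\<forall>u :: real \<Rightarrow> real ^ 'n. tp_curve u lam Lam q \<and> TP q u \<le> ennreal M \<longrightarrow>
      (\<forall>a b. a < b \<longrightarrow> b - a \<le> 1/2 \<longrightarrow> C * (b - a) \<le> norm (u b - u a))"
    using uniform_chord_lower_bound[of q lam Lam M] assms by auto
  show ?thesis
  proof (intro exI[of _ "C / 2"] conjI allI impI)
    show "C / 2 > 0" using C by simp
    fix u v :: "real \<Rightarrow> real ^ 'n"
    assume H: "u \<in> curve_class q \<and> (\<forall>x. lam \<le> norm (dv u x) \<and> norm (dv u x) \<le> Lam)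
      \<and> TP q u \<le> ennreal M \<and> v \<in> W_space q \<and> (\<forall>x. norm (dv v x - dv u x) \<le> C / 2)"
    then have u: "tp_curve u lam Lam q" using tp_curve_of_curve_class assms by blast
    then interpret tp_curve u lam Lam q .
    have "bil u \<le> ereal (1 / C)" using bil_le_of_chord_bound[OF periodic C] chord u H by blast
    then have "bil v \<le> 2 * bil u \<and> bil u < \<infinity>"
      using bil_le_twice_of_dv_close[OF periodic _ differentiable _ C] H unfolding W_space_def by auto
    then show "bil v \<le> 2 * bil u" "bil u < \<infinity>" by auto
  qed
qed

end
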